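(* Let $\chi$ be a character of $T$ of minimal depth $r>0$ such that the central character $\theta$ of $\pi_\chi=\mathrm{Ind}_B^G\chi$ has depth zero, and let $Y_\chi=g_d\Gamma g_d^{-1}=\begin{pmatrix}x_2\sqrt\epsilon&\epsilon^{-1}\varpi^{-d}\sqrt\epsilon\\ x_1^2\varpi^d\sqrt\epsilon&x_2\sqrt\epsilon\end{pmatrix}$ and $\zeta_\chi(t)=\chi(g_d^{-1}tg_d)$, where $\Gamma=\begin{pmatrix}x&0\\0&-\overline{x}\end{pmatrix}$, $x=x_1+x_2\sqrt\epsilon\in\mathfrak{p}_E^{-r}$, realizes $\chi$ on $T_{r/2+}/T_{r+}$ and $g_d=\begin{pmatrix}1&-\frac12\gamma^{-1}\\ \gamma&\frac12\end{pmatrix}$ with $\gamma=x_1\varpi^d\sqrt\epsilon$. Then for all $d>2r$, \[ \mathcal{S}_d(Y_\chi,\zeta_\chi)\cong\mathcal{S}_d(X_{\varpi^{-d}},\theta),\qquad X_{\varpi^{-d}}=\begin{pmatrix}0&\varpi^{-d}\sqrt\epsilon\\0&0\end{pmatrix}. \]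
   Context: $F$ non-archimedean local field, $p\neq2$, uniformiser $\varpi$; $E=F[\sqrt\epsilon]$ unramified quadratic. $G=\mathbb{U}(1,1)(F)$ (hermitian form $\mathrm{w}=\begin{pmatrix}0&1\\1&0\end{pmatrix}$), $\mathcal{K}=G\cap M_2(\mathcal{O}_E)$, $B$ upper triangular Borel, $T$ diagonal torus $\{\mathrm{diag}(a,\overline{a}^{-1})\}$ with filtration $T_r$ ($a\in1+\mathfrak{p}_E^{\lceil r\rceil}$), $Z\cong E^1$ the center; "minimal depth $r$" means depth on $T$ and depth on the split torus $\{\mathrm{diag}(a,a^{-1}):a\in F^\times\}$ both equal $r$. $\psi$: additive character of $E$ trivial on $\mathfrak{p}_E$, nontrivial on $\mathcal{O}_E$; $\Gamma$ realizes $\chi$ means $\chi(t)=\psi(\mathrm{Tr}(\Gamma(t-I)))$ for $t\in T_{r/2+}/T_{r+}$. For $X\in\mathfrak{k}_{-d}$, $\Psi_X(k)=\psi(\mathrm{Tr}(X(k-I)))$ on $\mathcal{J}_d=\begin{pmatrix}1+\mathfrak{p}_E^{\lceil d/2\rceil}&\mathfrak{p}_E^{\lceil d/2\rceil}\\ \mathfrak{p}_E^{\lceil (d+1)/2\rceil}&1+\mathfrak{p}_E^{\lceil d/2\rceil}\end{pmatrix}\cap G$; with $T(X)$ the centralizer of $X$ in $\mathcal{K}$ and $\zeta$ a character of $T(X)$ agreeing with $\Psi_X$ on $T(X)\cap\mathcal{J}_d$, $\mathcal{S}_d(X,\zeta)=\mathrm{Ind}_{T(X)\mathcal{J}_d}^{\mathcal{K}}\Psi_{X,\zeta}$.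 For the nilpotent $X_{\varpi^{-d}}$ the centralizer is $Z\mathcal{U}$ ($\mathcal{U}$ upper unipotent elements of $\mathcal{K}$), with $\theta$ extended trivially to $\mathcal{U}$. (The depth-zero assumption on $\theta$ can always be arranged after twisting by a character of $G$.) *)

theory Defs
  imports Complex_Main
begin

text \<open>E is modelled as a field type 'a with a discrete valuation v (only meaningful on
nonzero elements), the Galois conjugation cj of E/F, a uniformiser varpi of F (and of E,
since E/F is unramified) and an element s = sqrt(epsilon) with cj s = - s, epsilon = s^2 a
unit of F.  F is the fixed field of cj.\<close>

definition inP :: "('a::field \<Rightarrow> int) \<Rightarrow> int \<Rightarrow> 'a \<Rightarrow> bool" where
  "inP v n a \<longleftrightarrow> a = 0 \<or> v a \<ge> n"

definition v_cauchy :: "('a::field \<Rightarrow> int) \<Rightarrow> (nat \<Rightarrow> 'a) \<Rightarrow> bool" where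
  "v_cauchy v f \<longleftrightarrow> (\<forall>N. \<exists>M. \<forall>m\<ge>M. \<forall>n\<ge>M. inP v N (f m - f n))"

definition v_conv :: "('a::field \<Rightarrow> int) \<Rightarrow> (nat \<Rightarrow> 'a) \<Rightarrow> 'a \<Rightarrow> bool" where
  "v_conv v f L \<longleftrightarrow> (\<forall>N. \<exists>M. \<forall>n\<ge>M. inP v N (f n - L))"

definition unram_setup ::
  "('a::field \<Rightarrow> 'a) \<Rightarrow> ('a \<Rightarrow> int) \<Rightarrow> 'a \<Rightarrow> 'a \<Rightarrow> bool" where
  "unram_setup cj v varpi s \<longleftrightarrow>
     \<comment> \<open>cj is a field automorphism of order 2\<close>
     (\<forall>a b. cj (a + b) = cj a + cj b) \<and> (\<forall>a b. cj (a * b) = cj a * cj b) \<and>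
     (\<forall>a. cj (cj a) = a) \<and>
     \<comment> \<open>v is a (normalised, discrete) valuation on E, invariant under cj\<close>
     (\<forall>a b. a \<noteq> 0 \<longrightarrow> b \<noteq> 0 \<longrightarrow> v (a * b) = v a + v b) \<and>
     (\<forall>a b. a \<noteq> 0 \<longrightarrow> b \<noteq> 0 \<longrightarrow> a + b \<noteq> 0 \<longrightarrow> v (a + b) \<ge> min (v a) (v b)) \<and>
     (\<forall>a. a \<noteq> 0 \<longrightarrow> v (cj a) = v a) \<and>
     \<comment> \<open>E complete\<close>
     (\<forall>f. v_cauchy v f \<longrightarrow> (\<exists>L. v_conv v f L)) \<and>
     \<comment> \<open>finite residue field\<close>
     (\<exists>R. finite R \<and> (\<forall>a. inP v 0 a \<longrightarrow> (\<exists>r\<in>R. inP v 1 (a - r)))) \<and>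
     \<comment> \<open>p \<noteq> 2\<close>
     (2::'a) \<noteq> 0 \<and> v 2 = 0 \<and>
     \<comment> \<open>uniformiser of F which is also a uniformiser of E (E/F unramified)\<close>
     varpi \<noteq> 0 \<and> cj varpi = varpi \<and> v varpi = 1 \<and>
     \<comment> \<open>s = sqrt epsilon, epsilon = s^2 a unit of F, E = F[s]\<close>
     s \<noteq> 0 \<and> cj s = - s \<and> v s = 0"

datatype 'a m2 = M2 'a 'a 'a 'a   \<comment> \<open>M2 a b c d = [[a,b],[c,d]]\<close>

fun mmul :: "'a::field m2 \<Rightarrow> 'a m2 \<Rightarrow> 'a m2" where
  "mmul (M2 a b c d) (M2 e f g h) = M2 (a*e + b*g) (a*f + b*h) (c*e + d*g) (c*f + d*h)"

fun msub :: "'a::field m2 \<Rightarrow> 'a m2 \<Rightarrow> 'a m2" where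
  "msub (M2 a b c d) (M2 e f g h) = M2 (a - e) (b - f) (c - g) (d - h)"

fun mtrace :: "'a::field m2 \<Rightarrow> 'a" where
  "mtrace (M2 a b c d) = a + d"

fun m11 :: "'a m2 \<Rightarrow> 'a" where
  "m11 (M2 a b c d) = a"

fun minv :: "'a::field m2 \<Rightarrow> 'a m2" where
  "minv (M2 a b c d) = (let e = a*d - b*c in M2 (d/e) (-b/e) (-c/e) (a/e))"

fun mstar :: "('a \<Rightarrow> 'a) \<Rightarrow> 'a m2 \<Rightarrow> 'a m2" where
  "mstar cj (M2 a b c d) = M2 (cj a) (cj c) (cj b) (cj d)"

definition mI :: "'a::field m2" where "mI = M2 1 0 0 1"
definition wmat :: "'a::field m2" where "wmat = M2 0 1 1 0"

definition setprod :: "'a::field m2 set \<Rightarrow> 'a m2 set \<Rightarrow> 'a m2 set" where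
  "setprod A B = {mmul a b | a b. a \<in> A \<and> b \<in> B}"

definition UG :: "('a::field \<Rightarrow> 'a) \<Rightarrow> 'a m2 set" where
  "UG cj = {g. mmul (mstar cj g) (mmul wmat g) = wmat}"

fun entries_in :: "('a \<Rightarrow> bool) \<Rightarrow> 'a m2 \<Rightarrow> bool" where
  "entries_in P (M2 a b c d) \<longleftrightarrow> P a \<and> P b \<and> P c \<and> P d"

definition Kc :: "('a::field \<Rightarrow> 'a) \<Rightarrow> ('a \<Rightarrow> int) \<Rightarrow> 'a m2 set" where
  "Kc cj v = {g \<in> UG cj. entries_in (inP v 0) g}"

definition Ttor :: "('a::field \<Rightarrow> 'a) \<Rightarrow> 'a m2 set" where
  "Ttor cj = {M2 a 0 0 (inverse (cj a)) | a. a \<noteq> 0}"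

definition Tfil :: "('a::field \<Rightarrow> 'a) \<Rightarrow> ('a \<Rightarrow> int) \<Rightarrow> int \<Rightarrow> 'a m2 set" where
  "Tfil cj v n = {M2 a 0 0 (inverse (cj a)) | a. a \<noteq> 0 \<and> inP v n (a - 1)}"

text \<open>Filtration of the split torus {diag(a,a^-1) : a \<in> F^x}: a \<in> 1 + p_F^n.\<close>
definition Sfil :: "('a::field \<Rightarrow> 'a) \<Rightarrow> ('a \<Rightarrow> int) \<Rightarrow> int \<Rightarrow> 'a m2 set" where
  "Sfil cj v n = {M2 a 0 0 (inverse a) | a. a \<noteq> 0 \<and> cj a = a \<and> inP v n (a - 1)}"

text \<open>Z_{0+} = Z \<inter> T_{0+}, Z = {diag(z,z) : z \<in> E^1}.\<close>
definition Zfil1 :: "('a::field \<Rightarrow> 'a) \<Rightarrow> ('a \<Rightarrow> int) \<Rightarrow> 'a m2 set" where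
  "Zfil1 cj v = {M2 a 0 0 a | a. a * cj a = 1 \<and> inP v 1 (a - 1)}"

text \<open>J_d (d a positive integer): ceil(d/2) = (d+1) div 2, ceil((d+1)/2) = (d+2) div 2.\<close>
definition Jd :: "('a::field \<Rightarrow> 'a) \<Rightarrow> ('a \<Rightarrow> int) \<Rightarrow> nat \<Rightarrow> 'a m2 set" where
  "Jd cj v d = {g \<in> UG cj. case g of M2 a b c e \<Rightarrow>
      inP v ((int d + 1) div 2) (a - 1) \<and> inP v ((int d + 1) div 2) b \<and>
      inP v ((int d + 2) div 2) c \<and> inP v ((int d + 1) div 2) (e - 1)}"

definition is_char_on :: "'a::field m2 set \<Rightarrow> ('a m2 \<Rightarrow> complex) \<Rightarrow> bool" where
  "is_char_on H \<chi> \<longleftrightarrow> (\<forall>x\<in>H. \<chi> x \<noteq> 0) \<and> (\<forall>x\<in>H. \<forall>y\<in>H. \<chi> (mmul x y) = \<chi> x * \<chi> y)"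

definition psi_ok :: "('a::field \<Rightarrow> int) \<Rightarrow> ('a \<Rightarrow> complex) \<Rightarrow> bool" where
  "psi_ok v \<psi> \<longleftrightarrow> (\<forall>a b. \<psi> (a + b) = \<psi> a * \<psi> b) \<and> (\<forall>a. cmod (\<psi> a) = 1) \<and>
     (\<forall>a. inP v 1 a \<longrightarrow> \<psi> a = 1) \<and> (\<exists>a. inP v 0 a \<and> \<psi> a \<noteq> 1)"

text \<open>Minimal depth r (r a positive integer): depth r on T and on the split torus.\<close>
definition min_depth :: "('a::field \<Rightarrow> 'a) \<Rightarrow> ('a \<Rightarrow> int) \<Rightarrow> ('a m2 \<Rightarrow> complex) \<Rightarrow> nat \<Rightarrow> bool" where
  "min_depth cj v \<chi> r \<longleftrightarrow>
     (\<forall>t\<in>Tfil cj v (int r + 1). \<chi> t = 1) \<and> (\<exists>t\<in>Tfil cj v (int r). \<chi> t \<noteq> 1) \<and>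
     (\<forall>t\<in>Sfil cj v (int r + 1). \<chi> t = 1) \<and> (\<exists>t\<in>Sfil cj v (int r). \<chi> t \<noteq> 1)"

definition PsiX :: "('a::field \<Rightarrow> complex) \<Rightarrow> 'a m2 \<Rightarrow> 'a m2 \<Rightarrow> complex" where
  "PsiX \<psi> X k = \<psi> (mtrace (mmul X (msub k mI)))"

definition TX :: "('a::field \<Rightarrow> 'a) \<Rightarrow> ('a \<Rightarrow> int) \<Rightarrow> 'a m2 \<Rightarrow> 'a m2 set" where
  "TX cj v X = {k \<in> Kc cj v. mmul k X = mmul X k}"

definition PsiXz :: "('a::field \<Rightarrow> 'a) \<Rightarrow> ('a \<Rightarrow> int) \<Rightarrow> ('a \<Rightarrow> complex) \<Rightarrow> nat \<Rightarrow>
    'a m2 \<Rightarrow> ('a m2 \<Rightarrow> complex) \<Rightarrow> 'a m2 \<Rightarrow> complex" where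
  "PsiXz cj v \<psi> d X \<zeta> h =
     (let p = (SOME p. fst p \<in> TX cj v X \<and> snd p \<in> Jd cj v d \<and> h = mmul (fst p) (snd p))
      in \<zeta> (fst p) * PsiX \<psi> X (snd p))"

definition Sd :: "('a::field \<Rightarrow> 'a) \<Rightarrow> ('a \<Rightarrow> int) \<Rightarrow> ('a \<Rightarrow> complex) \<Rightarrow> nat \<Rightarrow>
    'a m2 \<Rightarrow> ('a m2 \<Rightarrow> complex) \<Rightarrow> ('a m2 \<Rightarrow> complex) set" where
  "Sd cj v \<psi> d X \<zeta> =
     {f. (\<forall>h\<in>setprod (TX cj v X) (Jd cj v d). \<forall>k\<in>Kc cj v.
            f (mmul h k) = PsiXz cj v \<psi> d X \<zeta> h * f k) \<and>
         (\<forall>k. k \<notin> Kc cj v \<longrightarrow> f k = 0)}"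

definition ract :: "'a::field m2 set \<Rightarrow> 'a m2 \<Rightarrow> ('a m2 \<Rightarrow> complex) \<Rightarrow> ('a m2 \<Rightarrow> complex)" where
  "ract K k f = (\<lambda>x. if x \<in> K then f (mmul x k) else 0)"

definition rep_iso :: "'a::field m2 set \<Rightarrow> ('a m2 \<Rightarrow> complex) set \<Rightarrow> ('a m2 \<Rightarrow> complex) set \<Rightarrow> bool" where
  "rep_iso K V W \<longleftrightarrow> (\<exists>\<Phi>. bij_betw \<Phi> V W \<and>
     (\<forall>f\<in>V. \<forall>g\<in>V. \<Phi> (\<lambda>x. f x + g x) = (\<lambda>x. \<Phi> f x + \<Phi> g x)) \<and>
     (\<forall>c. \<forall>f\<in>V. \<Phi> (\<lambda>x. c * f x) = (\<lambda>x. c * \<Phi> f x)) \<and>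
     (\<forall>k\<in>K. \<forall>f\<in>V. \<Phi> (ract K k f) = ract K k (\<Phi> f)))"

end

theory Submission
  imports Defs
begin

text \<open>
  Both \<open>T(X)J\<^sub>d\<close> and \<open>T(Y)J\<^sub>d\<close> equal the subgroup \<open>H\<^sub>d\<close> of \<open>K\<close> of matrices \<open>h\<close> with
  \<open>h\<^sub>2\<^sub>1 \<in> \<pp>\<^sup>n\<^sup>2\<close> and \<open>h\<^sub>1\<^sub>1 \<equiv> h\<^sub>2\<^sub>2 mod \<pp>\<^sup>n\<^sup>1\<close>, where \<open>n1 = \<lceil>d/2\<rceil>\<close> and \<open>n2 = \<lceil>(d+1)/2\<rceil>\<close> are
  the levels of \<open>J\<^sub>d\<close>; for \<open>Y\<close> the factorisation uses the torus \<open>T(Y) = g\<^sub>d T g\<^sub>d\<^sup>-\<^sup>1\<close> and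
  \<open>d > 2r\<close>. On \<open>H\<^sub>d\<close> both characters are evaluated through a norm-one \<open>a0 \<equiv> h\<^sub>2\<^sub>2\<close>:
  \<open>\<Psi>\<^sub>X\<^sub>,\<^sub>\<theta>(h) = \<chi>(a0) \<psi>(\<varpi>\<^sup>-\<^sup>d \<surd>\<epsilon> h\<^sub>2\<^sub>1 / a0)\<close> and
  \<open>\<Psi>\<^sub>Y\<^sub>,\<^sub>\<zeta>(h) = \<chi>(a0) \<psi>(\<varpi>\<^sup>-\<^sup>d \<surd>\<epsilon>\<^sup>-\<^sup>1 h\<^sub>2\<^sub>1 / a0)\<close>, the torus parts agreeing because \<open>\<theta>\<close>
  has depth zero and \<open>\<chi>\<close> has depth \<open>r < d - r\<close>. As \<open>E/F\<close> is unramified, \<open>\<epsilon>\<^sup>-\<^sup>1\<close> is a norm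
  \<open>N(\<mu>)\<close> modulo \<open>\<pp>\<^sup>n\<^sup>1\<close>; conjugation by \<open>diag(\<mu>, cj \<mu>\<^sup>-\<^sup>1) \<in> K\<close> preserves \<open>H\<^sub>d\<close> and carries
  the second character to the first, so left translation by this element is the isomorphism.
\<close>

lemma mmul_assoc: "mmul (mmul a b) c = mmul a (mmul b (c::'a::field m2))"
  by (cases a; cases b; cases c) (simp add: algebra_simps)

lemma mmul_mI [simp]: "mmul mI a = a" "mmul a mI = (a::'a::field m2)"
  by (cases a; simp add: mI_def)+

section \<open>Induced spaces and intertwining by translation\<close>

definition induced_space :: "'a::field m2 set \<Rightarrow> 'a m2 set \<Rightarrow> ('a m2 \<Rightarrow> complex) \<Rightarrow>
    ('a m2 \<Rightarrow> complex) set" where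
  "induced_space K H \<phi> =
     {f. (\<forall>h\<in>H. \<forall>k\<in>K. f (mmul h k) = \<phi> h * f k) \<and> (\<forall>k. k \<notin> K \<longrightarrow> f k = 0)}"

lemma Sd_eq_induced_space:
  "Sd cj v \<psi> d X \<zeta> = induced_space (Kc cj v) (setprod (TX cj v X) (Jd cj v d)) (PsiXz cj v \<psi> d X \<zeta>)"
  by (simp add: Sd_def induced_space_def)

definition left_transl :: "'a::field m2 set \<Rightarrow> 'a m2 \<Rightarrow> ('a m2 \<Rightarrow> complex) \<Rightarrow> 'a m2 \<Rightarrow> complex" where
  "left_transl K g f = (\<lambda>x. if x \<in> K then f (mmul g x) else 0)"

lemma left_transl_induced_space:
  assumes K_mmul: "\<And>x y. x \<in> K \<Longrightarrow> y \<in> K \<Longrightarrow> mmul x y \<in> K"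
    and f: "f \<in> induced_space K H' \<phi>'" and g: "g \<in> K" "mmul g' g = mI" and H: "H \<subseteq> K"
    and conj: "\<And>h. h \<in> H \<Longrightarrow> mmul g (mmul h g') \<in> H' \<and> \<phi>' (mmul g (mmul h g')) = \<phi> h"
  shows "left_transl K g f \<in> induced_space K H \<phi>"
  unfolding induced_space_def
proof (intro CollectI conjI ballI allI impI)
  fix h x assume h: "h \<in> H" and x: "x \<in> K"
  have "mmul g (mmul h x) = mmul (mmul g (mmul h g')) (mmul g x)"
    using g(2) by (simp only: mmul_assoc mmul_assoc[of g' g, symmetric] mmul_mI)
  moreover have "mmul h x \<in> K" using K_mmul H h x by blast
  ultimately have "left_transl K g f (mmul h x) = f (mmul (mmul g (mmul h g')) (mmul g x))"
    unfolding left_transl_def by simp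
  also have "\<dots> = \<phi> h * left_transl K g f x"
    using f conj[OF h] K_mmul[OF g(1) x] x unfolding induced_space_def left_transl_def by simp
  finally show "left_transl K g f (mmul h x) = \<phi> h * left_transl K g f x" .
qed (simp add: left_transl_def)

lemma left_transl_inverse:
  assumes K_mmul: "\<And>x y. x \<in> K \<Longrightarrow> y \<in> K \<Longrightarrow> mmul x y \<in> K"
    and f: "f \<in> induced_space K H \<phi>" and g: "g' \<in> K" "mmul g g' = mI"
  shows "left_transl K g' (left_transl K g f) = f"
proof
  fix x show "left_transl K g' (left_transl K g f) x = f x"
  proof (cases "x \<in> K")
    case True
    then have "mmul g (mmul g' x) = x" by (simp only: mmul_assoc[symmetric] g(2) mmul_mI)
    then show ?thesis using True K_mmul[OF g(1) True] by (simp add: left_transl_def)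
  qed (use f in \<open>simp add: left_transl_def induced_space_def\<close>)
qed

lemma left_transl_ract:
  assumes K_mmul: "\<And>x y. x \<in> K \<Longrightarrow> y \<in> K \<Longrightarrow> mmul x y \<in> K" and "g \<in> K" "k \<in> K"
  shows "left_transl K g (ract K k f) = ract K k (left_transl K g f)"
proof
  fix x show "left_transl K g (ract K k f) x = ract K k (left_transl K g f) x"
    using K_mmul[OF assms(2), of x] K_mmul[OF _ assms(3), of x]
    by (simp add: left_transl_def ract_def mmul_assoc)
qed

lemma rep_iso_induced_space_conj:
  fixes K H1 H2 :: "'a::field m2 set"
  assumes K_mmul: "\<And>x y. x \<in> K \<Longrightarrow> y \<in> K \<Longrightarrow> mmul x y \<in> K"
    and k: "k \<in> K" "k' \<in> K" "mmul k k' = mI" "mmul k' k = mI"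
    and H: "H1 \<subseteq> K" "H2 \<subseteq> K"
    and conj12: "\<And>h. h \<in> H2 \<Longrightarrow> mmul k (mmul h k') \<in> H1 \<and> \<phi>1 (mmul k (mmul h k')) = \<phi>2 h"
    and conj21: "\<And>h. h \<in> H1 \<Longrightarrow> mmul k' (mmul h k) \<in> H2"
  shows "rep_iso K (induced_space K H1 \<phi>1) (induced_space K H2 \<phi>2)"
proof -
  have conj21': "mmul k' (mmul h k) \<in> H2 \<and> \<phi>2 (mmul k' (mmul h k)) = \<phi>1 h" if "h \<in> H1" for h
  proof -
    have "mmul k (mmul (mmul k' (mmul h k)) k') = h"
      by (simp only: mmul_assoc k(3) mmul_mI flip: mmul_assoc[of k k'])
    then show ?thesis using conj12[OF conj21[OF that]] conj21[OF that] by simp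
  qed
  have "bij_betw (left_transl K k) (induced_space K H1 \<phi>1) (induced_space K H2 \<phi>2)"
  proof (rule bij_betw_byWitness[where f' = "left_transl K k'"])
    show "left_transl K k ` induced_space K H1 \<phi>1 \<subseteq> induced_space K H2 \<phi>2"
      using left_transl_induced_space[OF K_mmul _ k(1,4) H(2) conj12] by blast
    show "left_transl K k' ` induced_space K H2 \<phi>2 \<subseteq> induced_space K H1 \<phi>1"
      using left_transl_induced_space[OF K_mmul _ k(2,3) H(1) conj21'] by blast
  qed (use left_transl_inverse[OF K_mmul] k in blast)+
  then show ?thesis
    unfolding rep_iso_def using left_transl_ract[OF K_mmul k(1)]
    by (intro exI[of _ "left_transl K k"] conjI ballI allI) (auto simp: left_transl_def)
qed

section \<open>Arithmetic of the unramified extension\<close>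

locale unram_field =
  fixes cj :: "'a::field \<Rightarrow> 'a" and v :: "'a \<Rightarrow> int" and varpi s :: 'a
  assumes unram: "unram_setup cj v varpi s"
begin

lemma cj_add [simp]: "cj (a + b) = cj a + cj b"
  and cj_mult [simp]: "cj (a * b) = cj a * cj b"
  and cj_cj [simp]: "cj (cj a) = a"
  using unram unfolding unram_setup_def by blast+

lemma v_mult: "a \<noteq> 0 \<Longrightarrow> b \<noteq> 0 \<Longrightarrow> v (a * b) = v a + v b"
  and v_ultra: "a \<noteq> 0 \<Longrightarrow> b \<noteq> 0 \<Longrightarrow> a + b \<noteq> 0 \<Longrightarrow> v (a + b) \<ge> min (v a) (v b)"
  and finite_residue_field: "\<exists>R. finite R \<and> (\<forall>a. inP v 0 a \<longrightarrow> (\<exists>r\<in>R. inP v 1 (a - r)))"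
  using unram unfolding unram_setup_def by blast+

lemma two_neq_zero [simp]: "(2::'a) \<noteq> 0"
  and v_two [simp]: "v 2 = 0"
  and varpi_neq_zero [simp]: "varpi \<noteq> 0"
  and cj_varpi [simp]: "cj varpi = varpi"
  and v_varpi [simp]: "v varpi = 1"
  and s_neq_zero [simp]: "s \<noteq> 0"
  and cj_s [simp]: "cj s = - s"
  and v_s [simp]: "v s = 0"
  using unram unfolding unram_setup_def by blast+

lemma four_neq_zero [simp]: "(4::'a) \<noteq> 0"
  using two_neq_zero mult_eq_0_iff[of "2::'a" 2] by simp

lemma cj_0 [simp]: "cj 0 = 0" by (metis add_cancel_right_right cj_add)
lemma cj_neg [simp]: "cj (- a) = - cj a" by (metis add_eq_0_iff cj_0 cj_add)
lemma cj_diff [simp]: "cj (a - b) = cj a - cj b" by (metis cj_add cj_neg diff_conv_add_uminus)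
lemma cj_eq_0_iff [simp]: "cj a = 0 \<longleftrightarrow> a = 0" by (metis cj_0 cj_cj)

lemma cj_1 [simp]: "cj 1 = 1"
proof -
  have "cj 1 * cj 1 = cj 1" by (metis cj_mult mult_1)
  moreover have "cj 1 \<noteq> 0" by simp
  ultimately show ?thesis by (metis mult_cancel_left2)
qed

lemma cj_inverse [simp]: "cj (inverse a) = inverse (cj a)"
proof (cases "a = 0")
  case False
  then have "cj a * cj (inverse a) = 1" by (metis cj_1 cj_mult right_inverse)
  then show ?thesis by (metis inverse_unique)
qed simp

lemma cj_divide [simp]: "cj (a / b) = cj a / cj b" by (simp add: divide_inverse)
lemma cj_2 [simp]: "cj 2 = 2" by (metis cj_1 cj_add one_add_one)
lemma cj_power [simp]: "cj (a ^ n) = cj a ^ n" by (induction n) auto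

lemma v_cj [simp]: "v (cj a) = v a"
  using unram unfolding unram_setup_def by (cases "a = 0") auto

lemma v_1 [simp]: "v 1 = 0" using v_mult[of 1 1] by simp

lemma v_neg [simp]: "v (- a) = v a"
proof (cases "a = 0")
  case False
  have "v (-1) = 0" using v_mult[of "-1" "-1"] by simp
  then show ?thesis using False v_mult[of "-1" a] by simp
qed simp

lemma v_inverse: "a \<noteq> 0 \<Longrightarrow> v (inverse a) = - v a"
  using v_mult[of a "inverse a"] by simp

lemma v_power: "a \<noteq> 0 \<Longrightarrow> v (a ^ n) = int n * v a"
  by (induction n) (auto simp: v_mult algebra_simps)

lemma norm_one_unit: "a * cj a = 1 \<Longrightarrow> a \<noteq> 0 \<and> v a = 0"
  using v_mult[of a "cj a"] by (cases "a = 0") auto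

lemma norm_one_cj: "a * cj a = 1 \<Longrightarrow> cj a = inverse a"
  by (metis inverse_unique)

lemma inP_0 [simp]: "inP v n 0" by (simp add: inP_def)
lemma inP_1 [simp]: "inP v 0 1" by (simp add: inP_def)
lemma inP_unit: "v a = 0 \<Longrightarrow> inP v 0 a" by (simp add: inP_def)
lemma inP_neg [simp]: "inP v n (- a) \<longleftrightarrow> inP v n a" by (auto simp: inP_def)
lemma inP_cj [simp]: "inP v n (cj a) \<longleftrightarrow> inP v n a" by (auto simp: inP_def)
lemma inP_mono: "m \<le> n \<Longrightarrow> inP v n a \<Longrightarrow> inP v m a" unfolding inP_def by auto

lemma inP_diff_commute: "inP v n (a - b) \<longleftrightarrow> inP v n (b - a)"
  by (metis inP_neg minus_diff_eq)

lemma inP_add: "inP v n a \<Longrightarrow> inP v n b \<Longrightarrow> inP v n (a + b)"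
  unfolding inP_def using v_ultra[of a b] by fastforce

lemma inP_diff: "inP v n a \<Longrightarrow> inP v n b \<Longrightarrow> inP v n (a - b)"
  using inP_add[of n a "-b"] by simp

lemma inP_mult: "inP v m a \<Longrightarrow> inP v n b \<Longrightarrow> inP v (m + n) (a * b)"
  unfolding inP_def by (cases "a = 0"; cases "b = 0") (auto simp: v_mult)

lemma inP_mult_left: "inP v 0 a \<Longrightarrow> inP v n b \<Longrightarrow> inP v n (a * b)"
  using inP_mult[of 0 a n b] by simp

lemma inP_mult_right: "inP v n a \<Longrightarrow> inP v 0 b \<Longrightarrow> inP v n (a * b)"
  using inP_mult[of n a 0 b] by simp

lemma inP_mult_le: "inP v m a \<Longrightarrow> inP v n b \<Longrightarrow> k \<le> m + n \<Longrightarrow> inP v k (a * b)"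
  using inP_mult inP_mono by blast

lemma inP_add_le: "inP v m a \<Longrightarrow> inP v n b \<Longrightarrow> k \<le> m \<Longrightarrow> k \<le> n \<Longrightarrow> inP v k (a + b)"
  using inP_add inP_mono by blast

lemma inP_mult_unit_iff: "u \<noteq> 0 \<Longrightarrow> v u = 0 \<Longrightarrow> inP v n (a * u) \<longleftrightarrow> inP v n a"
  unfolding inP_def by (cases "a = 0") (auto simp: v_mult)

lemma inP_divide_unit_iff: "u \<noteq> 0 \<Longrightarrow> v u = 0 \<Longrightarrow> inP v n (a / u) \<longleftrightarrow> inP v n a"
  using inP_mult_unit_iff[of "inverse u"] by (simp add: divide_inverse v_inverse)

lemma inP_inverse_unit: "a \<noteq> 0 \<Longrightarrow> v a = 0 \<Longrightarrow> inP v 0 (inverse a)"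
  by (simp add: inP_def v_inverse)

lemma inP_of_congr_1: "inP v m (a - 1) \<Longrightarrow> m \<ge> 0 \<Longrightarrow> inP v 0 a"
  using inP_add[OF inP_mono[of 0 m] inP_1, of "a - 1"] by simp

lemma inP_prime: "inP v 0 a \<Longrightarrow> inP v 0 b \<Longrightarrow> inP v 1 (a * b) \<Longrightarrow> inP v 1 a \<or> inP v 1 b"
  unfolding inP_def by (cases "a = 0"; cases "b = 0") (auto simp: v_mult)

lemma unit_if_not_inP_1: "inP v 0 a \<Longrightarrow> \<not> inP v 1 a \<Longrightarrow> a \<noteq> 0 \<and> v a = 0"
  by (auto simp: inP_def)

lemma unit_congr: "a \<noteq> 0 \<Longrightarrow> v a = 0 \<Longrightarrow> inP v 1 (b - a) \<Longrightarrow> b \<noteq> 0 \<and> v b = 0"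
proof -
  assume a: "a \<noteq> 0" "v a = 0" and ba: "inP v 1 (b - a)"
  show ?thesis
  proof (cases "b - a = 0")
    case False
    then have vba: "v (b - a) > 0" using ba by (auto simp: inP_def)
    have b: "b \<noteq> 0" using vba a by auto
    have "v b \<ge> 0" using v_ultra[OF a(1) False] vba a(2) b by simp
    moreover have "v a \<ge> min (v b) (v (b - a))"
      using v_ultra[of b "- (b - a)"] a(1) b False v_neg[of "b - a"] by simp
    ultimately show ?thesis using a(2) b vba by linarith
  qed (use a in simp)
qed

end

section \<open>Norms from the unramified extension\<close>

lemma card_le_twice_card_image:
  assumes fin: "finite Q" and x0: "x0 \<in> Q"
    and two: "\<And>x y. x \<in> Q \<Longrightarrow> y \<in> Q \<Longrightarrow> f x = f y \<Longrightarrow> y = x \<or> y = \<sigma> x"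
    and one: "\<And>x. x \<in> Q \<Longrightarrow> f x = f x0 \<Longrightarrow> x = x0"
  shows "card Q + 1 \<le> 2 * card (f ` Q)"
proof -
  let ?Q = "Q - {x0}"
  have "card ?Q \<le> card (\<Union>y\<in>f ` ?Q. {x\<in>?Q. f x = y})"
    by (rule card_mono) (use fin in auto)
  also have "\<dots> \<le> (\<Sum>y\<in>f ` ?Q. card {x\<in>?Q. f x = y})"
    by (rule card_UN_le) (use fin in auto)
  also have "\<dots> \<le> (\<Sum>y\<in>f ` ?Q. 2)"
  proof (rule sum_mono)
    fix y assume "y \<in> f ` ?Q"
    then obtain x1 where x1: "x1 \<in> ?Q" "y = f x1" by auto
    have "{x\<in>?Q. f x = y} \<subseteq> {x1, \<sigma> x1}" using two x1 by fastforce
    then have "card {x\<in>?Q. f x = y} \<le> card {x1, \<sigma> x1}" by (rule card_mono[rotated]) simp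
    also have "\<dots> \<le> 2" by (cases "x1 = \<sigma> x1") auto
    finally show "card {x\<in>?Q. f x = y} \<le> 2" .
  qed
  also have "\<dots> = 2 * card (f ` ?Q)" by simp
  finally have A: "card ?Q \<le> 2 * card (f ` ?Q)" .
  have "f ` ?Q \<subseteq> f ` Q - {f x0}" using one by auto
  then have "card (f ` ?Q) \<le> card (f ` Q - {f x0})" by (rule card_mono[rotated]) (use fin in simp)
  also have "\<dots> = card (f ` Q) - 1" using x0 by (simp add: card_Diff_singleton)
  finally have B: "card (f ` ?Q) \<le> card (f ` Q) - 1" .
  have "card Q \<ge> 1" "card (f ` Q) \<ge> 1"
    using x0 fin by (auto simp: Suc_le_eq card_gt_0_iff)
  moreover have "card ?Q = card Q - 1" using x0 by (simp add: card_Diff_singleton)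
  ultimately show ?thesis using A B by linarith
qed

context unram_field
begin

definition ints_F :: "'a set" where
  "ints_F = {a. cj a = a \<and> inP v 0 a}"

lemma ints_F_closed: "0 \<in> ints_F" "1 \<in> ints_F" "a \<in> ints_F \<Longrightarrow> - a \<in> ints_F"
  "a \<in> ints_F \<Longrightarrow> b \<in> ints_F \<Longrightarrow> a + b \<in> ints_F" "a \<in> ints_F \<Longrightarrow> b \<in> ints_F \<Longrightarrow> a - b \<in> ints_F"
  "a \<in> ints_F \<Longrightarrow> b \<in> ints_F \<Longrightarrow> a * b \<in> ints_F"
  unfolding ints_F_def using inP_add inP_diff inP_mult_left by auto

text \<open>\<open>Q\<close> is a finite set of representatives of \<open>\<O>\<^sub>F/\<pp>\<^sub>F\<close> and \<open>rep\<close> the reduction map onto it.\<close>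
definition residue_system :: "'a set \<Rightarrow> ('a \<Rightarrow> 'a) \<Rightarrow> bool" where
  "residue_system Q rep \<longleftrightarrow> finite Q \<and> Q \<subseteq> ints_F \<and>
     (\<forall>a\<in>ints_F. rep a \<in> Q \<and> inP v 1 (a - rep a)) \<and>
     (\<forall>a b. inP v 1 (a - b) \<longrightarrow> rep a = rep b) \<and> (\<forall>q\<in>Q. rep q = q)"

lemma exists_residue_system: "\<exists>Q rep. residue_system Q rep"
proof -
  obtain R where R: "finite R" "\<And>a. inP v 0 a \<Longrightarrow> \<exists>r\<in>R. inP v 1 (a - r)"
    using finite_residue_field by blast
  define RF where "RF = {x \<in> (\<lambda>r. (r + cj r) / 2) ` R. x \<in> ints_F}"
  have cover: "\<exists>x\<in>RF. inP v 1 (a - x)" if a: "a \<in> ints_F" for a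
  proof -
    obtain r where r: "r \<in> R" "inP v 1 (a - r)" using R(2) a unfolding ints_F_def by blast
    have "inP v 1 (a - cj r)" using r(2) inP_cj[of 1 "a - r"] a unfolding ints_F_def by simp
    then have "inP v 1 ((a - r) + (a - cj r))" by (rule inP_add[OF r(2)])
    moreover have "a - (r + cj r) / 2 = ((a - r) + (a - cj r)) / 2" by (simp add: field_simps)
    ultimately have x1: "inP v 1 (a - (r + cj r) / 2)"
      using inP_divide_unit_iff[OF two_neq_zero v_two] by metis
    have a0: "inP v 0 a" using a unfolding ints_F_def by blast
    have "inP v 0 (a - (a - (r + cj r) / 2))" using inP_diff[OF a0 inP_mono[OF _ x1]] by simp
    moreover have "cj ((r + cj r) / 2) = (r + cj r) / 2" by (simp add: add.commute)
    ultimately have "(r + cj r) / 2 \<in> RF" unfolding RF_def ints_F_def using r(1) by auto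
    then show ?thesis using x1 by blast
  qed
  define rep where "rep a = (SOME x. x \<in> RF \<and> inP v 1 (a - x))" for a
  have rep: "rep a \<in> RF \<and> inP v 1 (a - rep a)" if "a \<in> ints_F" for a
    unfolding rep_def using cover[OF that] by (rule someI2_bex) auto
  have rep_eq: "rep a = rep b" if "inP v 1 (a - b)" for a b
  proof -
    have "inP v 1 (a - x) \<longleftrightarrow> inP v 1 (b - x)" for x
      using inP_diff[OF _ that, of "a - x"] inP_add[OF that, of "b - x"] by auto
    then show ?thesis unfolding rep_def by simp
  qed
  have rep_idem: "rep (rep a) = rep a" if "a \<in> ints_F" for a
    using rep_eq inP_diff_commute[THEN iffD1, OF rep[OF that, THEN conjunct2]] by blast
  have RF_ints_F: "RF \<subseteq> ints_F" unfolding RF_def by blast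
  have "finite (rep ` RF)" unfolding RF_def using R(1) by simp
  moreover have "rep ` RF \<subseteq> ints_F" using rep RF_ints_F by blast
  moreover have "\<forall>a\<in>ints_F. rep a \<in> rep ` RF \<and> inP v 1 (a - rep a)"
  proof
    fix a assume a: "a \<in> ints_F"
    have "rep (rep a) \<in> rep ` RF" using rep[OF a] by blast
    then show "rep a \<in> rep ` RF \<and> inP v 1 (a - rep a)" using rep[OF a] rep_idem[OF a] by simp
  qed
  moreover have "\<forall>q\<in>rep ` RF. rep q = q" using rep_idem RF_ints_F by auto
  ultimately have "residue_system (rep ` RF) rep" unfolding residue_system_def using rep_eq by blast
  then show ?thesis by blast
qed

lemma residue_system_square_fibre:
  assumes Q: "residue_system Q rep" and xy: "x \<in> Q" "y \<in> Q" "inP v 1 (x*x - y*y)"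
  shows "y = x \<or> y = rep (- x)"
proof -
  have rep_eq: "\<And>a b. inP v 1 (a - b) \<Longrightarrow> rep a = rep b" and rep_Q: "\<And>q. q \<in> Q \<Longrightarrow> rep q = q"
    and "Q \<subseteq> ints_F"
    using Q unfolding residue_system_def by blast+
  then have x0: "inP v 0 x" "inP v 0 y" using xy(1,2) unfolding ints_F_def by auto
  have "x*x - y*y = (x - y) * (x + y)" by (simp add: algebra_simps)
  then have "inP v 1 ((x - y) * (x + y))" using xy(3) by simp
  then have "inP v 1 (x - y) \<or> inP v 1 (x + y)"
    by (rule inP_prime[OF inP_diff[OF x0] inP_add[OF x0]])
  then show ?thesis
  proof
    assume "inP v 1 (x - y)"
    then show ?thesis using rep_eq[of x y] rep_Q xy(1,2) by simp
  next
    assume "inP v 1 (x + y)"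
    then have "inP v 1 (- x - y)" using inP_neg[of 1 "x + y"] by simp
    then show ?thesis using rep_eq[of "- x" y] rep_Q xy(2) by simp
  qed
qed

lemma residue_system_card_quadratic:
  assumes Q: "residue_system Q rep" and c: "c \<in> ints_F" "c \<noteq> 0" "v c = 0" and e: "e \<in> ints_F"
  shows "card Q + 1 \<le> 2 * card ((\<lambda>x. rep (c*(x*x) + e)) ` Q)"
proof -
  have fin: "finite Q" and Q_ints_F: "Q \<subseteq> ints_F" and rep: "\<And>a. a \<in> ints_F \<Longrightarrow> inP v 1 (a - rep a)"
    and rep_eq: "\<And>a b. inP v 1 (a - b) \<Longrightarrow> rep a = rep b" and rep_Q: "\<And>q. q \<in> Q \<Longrightarrow> rep q = q"
    using Q unfolding residue_system_def by blast+
  show ?thesis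
  proof (rule card_le_twice_card_image[OF fin, where \<sigma> = "\<lambda>x. rep (- x)"])
    have fibre: "y = x \<or> y = rep (- x)"
      if "x \<in> Q" "y \<in> Q" "rep (c*(x*x) + e) = rep (c*(y*y) + e)" for x y
    proof (rule residue_system_square_fibre[OF Q that(1,2)])
      have "x \<in> ints_F" "y \<in> ints_F" using Q_ints_F that(1,2) by auto
      then have xy: "c*(x*x) + e \<in> ints_F" "c*(y*y) + e \<in> ints_F" by (simp_all add: ints_F_closed c(1) e)
      have "inP v 1 ((c*(x*x) + e) - (c*(y*y) + e))"
        using inP_diff[OF rep[OF xy(1)] rep[OF xy(2)]] that(3) by simp
      then have "inP v 1 ((x*x - y*y) * c)" by (simp add: algebra_simps)
      then show "inP v 1 (x*x - y*y)" using inP_mult_unit_iff c(2,3) by blast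
    qed
    then show "\<And>x y. x \<in> Q \<Longrightarrow> y \<in> Q \<Longrightarrow> rep (c*(x*x) + e) = rep (c*(y*y) + e) \<Longrightarrow>
        y = x \<or> y = rep (- x)" .
    show r0: "rep 0 \<in> Q" using Q ints_F_closed(1) unfolding residue_system_def by blast
    have "inP v 1 (- rep 0)" using rep[OF ints_F_closed(1)] by simp
    from inP_add[OF this this] have "inP v 1 (- rep 0 - rep 0)" by simp
    then have "rep (- rep 0) = rep 0" using rep_eq[of "- rep 0" "rep 0"] rep_Q[OF r0] by simp
    then show "x = rep 0" if "x \<in> Q" "rep (c*(x*x) + e) = rep (c*(rep 0*rep 0) + e)" for x
      using fibre[OF r0 that(1) that(2)[symmetric]] by auto
  qed
qed

text \<open>The squares and the elements \<open>\<epsilon>b\<^sup>2 - 1\<close> each fill more than half of the residue field.\<close>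
lemma exists_norm_congr_mod_p:
  "\<exists>a b. cj a = a \<and> cj b = b \<and> inP v 0 a \<and> inP v 0 b \<and> inP v 1 (a*a - s*s*(b*b) + 1)"
proof -
  obtain Q rep where Q: "residue_system Q rep" using exists_residue_system by blast
  then have Q_ints_F: "Q \<subseteq> ints_F" and rep: "\<And>a. a \<in> ints_F \<Longrightarrow> rep a \<in> Q \<and> inP v 1 (a - rep a)"
    unfolding residue_system_def by blast+
  have ss: "s*s \<in> ints_F" "s*s \<noteq> 0" "v (s*s) = 0" by (auto simp: ints_F_def inP_def v_mult)
  define f where "f a = rep (1*(a*a) + 0)" for a
  define g where "g b = rep (s*s*(b*b) + -1)" for b
  have "1*(a*a) + 0 \<in> ints_F" "s*s*(a*a) + -1 \<in> ints_F" if "a \<in> Q" for a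
    using subsetD[OF Q_ints_F that] by (simp_all add: ints_F_closed ss(1))
  note args_ints_F = this
  have cf: "card Q + 1 \<le> 2 * card (f ` Q)"
    unfolding f_def by (rule residue_system_card_quadratic[OF Q]) (auto simp: ints_F_def)
  have cg: "card Q + 1 \<le> 2 * card (g ` Q)"
    unfolding g_def by (rule residue_system_card_quadratic[OF Q ss]) (auto simp: ints_F_def)
  have images: "f ` Q \<subseteq> Q" "g ` Q \<subseteq> Q" unfolding f_def g_def using rep args_ints_F by blast+
  have fin: "finite Q" using Q unfolding residue_system_def by blast
  have "f ` Q \<inter> g ` Q \<noteq> {}"
  proof
    assume "f ` Q \<inter> g ` Q = {}"
    then have "card (f ` Q) + card (g ` Q) = card (f ` Q \<union> g ` Q)"
      using fin by (simp add: card_Un_disjoint)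
    also have "\<dots> \<le> card Q" using images fin by (simp add: card_mono)
    finally show False using cf cg by linarith
  qed
  then obtain a b where ab: "a \<in> Q" "b \<in> Q" "f a = g b" by blast
  have "inP v 1 ((1*(a*a) + 0 - f a) - (s*s*(b*b) + -1 - g b))"
    unfolding f_def g_def
    using inP_diff[OF rep[OF args_ints_F(1)[OF ab(1)], THEN conjunct2] rep[OF args_ints_F(2)[OF ab(2)], THEN conjunct2]]
    by blast
  then have "inP v 1 (a*a - s*s*(b*b) + 1)" using ab(3) by (simp add: algebra_simps)
  then show ?thesis using ab(1,2) Q_ints_F unfolding ints_F_def by blast
qed

lemma hensel_sqrt:
  assumes "cj a = a" "cj u = u" "a \<noteq> 0" "v a = 0" "inP v 1 (a*a - u)"
  shows "\<exists>b. cj b = b \<and> inP v 1 (b - a) \<and> inP v (int k + 1) (b*b - u)"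
proof (induction k)
  case 0 then show ?case using assms by (intro exI[of _ a]) simp
next
  case (Suc k)
  then obtain b where b: "cj b = b" "inP v 1 (b - a)" "inP v (int k + 1) (b*b - u)"
    by blast
  have bu: "b \<noteq> 0" "v b = 0" using unit_congr[OF assms(3,4) b(2)] by auto
  define \<delta> where "\<delta> = (b*b - u) / (2*b)"
  have two_b: "2*b \<noteq> 0" "v (2*b) = 0" using bu by (auto simp: v_mult)
  have \<delta>: "inP v (int k + 1) \<delta>" unfolding \<delta>_def using b(3) inP_divide_unit_iff[OF two_b] by simp
  have "2*b*\<delta> = b*b - u" unfolding \<delta>_def using two_b(1) by simp
  then have "(b - \<delta>) * (b - \<delta>) - u = \<delta> * \<delta>" by algebra
  moreover have "inP v (int (Suc k) + 1) (\<delta> * \<delta>)" using inP_mult_le[OF \<delta> \<delta>] by simp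
  moreover have "inP v 1 ((b - \<delta>) - a)" using inP_diff[OF b(2) inP_mono[OF _ \<delta>]] by (simp add: algebra_simps)
  moreover have "cj (b - \<delta>) = b - \<delta>" unfolding \<delta>_def using b(1) assms(2) by simp
  ultimately show ?case by (intro exI[of _ "b - \<delta>"]) simp
qed

lemma exists_norm_congr:
  "\<exists>a b. cj a = a \<and> cj b = b \<and> inP v (int k + 1) (a*a - s*s*(b*b) + 1)"
proof -
  have ss: "cj (s*s) = s*s" "s*s \<noteq> 0" "v (s*s) = 0" by (auto simp: v_mult)
  obtain a b where ab: "cj a = a" "cj b = b" "inP v 0 a" "inP v 0 b"
    "inP v 1 (a*a - s*s*(b*b) + 1)"
    using exists_norm_congr_mod_p by blast
  show ?thesis
  proof (cases "inP v 1 a")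
    case False
    then have "a \<noteq> 0" "v a = 0" using unit_if_not_inP_1 ab(3) by auto
    moreover have "inP v 1 (a*a - (s*s*(b*b) - 1))" using ab(5) by (simp add: algebra_simps)
    ultimately obtain a' where "cj a' = a'" "inP v (int k + 1) (a'*a' - (s*s*(b*b) - 1))"
      using hensel_sqrt[OF ab(1), of "s*s*(b*b) - 1" k] ab(2) by auto
    then show ?thesis using ab(2) by (auto simp: algebra_simps)
  next
    case True
    have "\<not> inP v 1 b"
    proof
      assume "inP v 1 b"
      then have "inP v 1 (a*a - s*s*(b*b))"
        using inP_mult_le[OF True ab(3)] inP_mult_le[of 0 "s*s" 1 "b*b"] inP_mult_le[of 1 b 0 b] ab(4)
        by (intro inP_diff) (auto simp: inP_unit ss mult.assoc)
      then have "inP v 1 ((a*a - s*s*(b*b) + 1) - (a*a - s*s*(b*b)))" using inP_diff ab(5) by blast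
      then show False by (simp add: inP_def)
    qed
    then have "b \<noteq> 0" "v b = 0" using unit_if_not_inP_1 ab(4) by auto
    moreover have "b*b - (a*a + 1) / (s*s) = (a*a - s*s*(b*b) + 1) / (- (s*s))"
      using ss by (simp add: field_simps)
    then have "inP v 1 (b*b - (a*a + 1) / (s*s))"
      using ab(5) inP_divide_unit_iff[of "- (s*s)"] ss by simp
    ultimately obtain b' where b': "cj b' = b'" "inP v (int k + 1) (b'*b' - (a*a + 1) / (s*s))"
      using hensel_sqrt[OF ab(2), of "(a*a + 1) / (s*s)" k] ab(1) ss(1) by auto
    have "a*a - s*s*(b'*b') + 1 = (b'*b' - (a*a + 1) / (s*s)) * (- (s*s))"
      using ss by (simp add: field_simps)
    then have "inP v (int k + 1) (a*a - s*s*(b'*b') + 1)"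
      using b'(2) inP_mult_unit_iff[of "- (s*s)"] ss by simp
    then show ?thesis using ab(1) b'(1) by blast
  qed
qed

lemma exists_unit_norm_congr: "\<exists>\<mu>. \<mu> \<noteq> 0 \<and> v \<mu> = 0 \<and> inP v n (\<mu> * cj \<mu> * (s*s) - 1)"
proof -
  obtain a b where ab: "cj a = a" "cj b = b" "inP v (int (nat n) + 1) (a*a - s*s*(b*b) + 1)"
    using exists_norm_congr by blast
  define \<mu> where "\<mu> = (a + b*s) / s"
  have eq: "\<mu> * cj \<mu> * (s*s) - 1 = - (a*a - s*s*(b*b) + 1)"
    unfolding \<mu>_def using ab(1,2) by (simp add: field_simps)
  have \<mu>: "inP v (int (nat n) + 1) (\<mu> * cj \<mu> * (s*s) - 1)"
    unfolding eq inP_neg by (rule ab(3))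
  have "inP v 1 (\<mu> * cj \<mu> * (s*s) - 1)" using inP_mono[OF _ \<mu>] by simp
  then have "\<mu> * cj \<mu> * (s*s) \<noteq> 0 \<and> v (\<mu> * cj \<mu> * (s*s)) = 0"
    using unit_congr[of 1 "\<mu> * cj \<mu> * (s*s)"] by simp
  then have "\<mu> \<noteq> 0 \<and> v \<mu> = 0" using v_mult[of \<mu> "cj \<mu>"] by (auto simp: v_mult)
  then show ?thesis using inP_mono[OF _ \<mu>, of n] by auto
qed

text \<open>A Cayley transform: \<open>(E + 1) / (cj E + 1)\<close> has norm one and is congruent to \<open>E\<close> to the
  same order as \<open>E cj E\<close> is to \<open>1\<close>; when \<open>E \<equiv> -1\<close> use \<open>(E - 1) / (1 - cj E)\<close> instead.\<close>
lemma exists_norm_one_congr: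
  assumes E: "inP v 0 E" and norm: "inP v n (E * cj E - 1)"
  shows "\<exists>a0. a0 * cj a0 = 1 \<and> inP v n (a0 - E)"
proof (cases "inP v 1 (E + 1)")
  case False
  then have u: "E + 1 \<noteq> 0" "v (E + 1) = 0" using unit_if_not_inP_1 inP_add[OF E inP_1] by auto
  then have u': "cj E + 1 \<noteq> 0" "v (cj E + 1) = 0" by (metis cj_1 cj_add cj_eq_0_iff v_cj)+
  define a0 where "a0 = (E + 1) / (cj E + 1)"
  have norm_one: "a0 * cj a0 = 1" unfolding a0_def using u(1) u'(1) by simp
  have eq: "a0 - E = - (E * cj E - 1) / (cj E + 1)" unfolding a0_def using u'
    by (simp add: field_simps)
  have "inP v n (a0 - E)" unfolding eq inP_divide_unit_iff[OF u'] inP_neg by (rule norm)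
  with norm_one show ?thesis by blast
next
  case True
  have "E - 1 = (E + 1) + (- 2)" by simp
  then have u: "E - 1 \<noteq> 0" "v (E - 1) = 0"
    using unit_congr[of "-2" "E - 1"] True by (simp_all add: algebra_simps)
  then have u': "1 - cj E \<noteq> 0" "v (1 - cj E) = 0"
    by (metis cj_1 cj_diff cj_eq_0_iff minus_diff_eq neg_equal_0_iff_equal v_cj v_neg)+
  define a0 where "a0 = (E - 1) / (1 - cj E)"
  have "(E - 1) * (cj E - 1) = (1 - cj E) * (1 - E)" by (simp add: algebra_simps)
  then have "a0 * cj a0 = 1" unfolding a0_def using u(1) u'(1) by (simp add: divide_simps)
  moreover have "a0 - E = (E * cj E - 1) / (1 - cj E)" unfolding a0_def using u'
    by (simp add: field_simps)
  then have "inP v n (a0 - E)" using norm inP_divide_unit_iff[OF u'] by simp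
  ultimately show ?thesis by blast
qed

end

section \<open>The subgroups \<open>J\<^sub>d\<close> and \<open>H\<^sub>d\<close> of \<open>K\<close>\<close>

lemma UG_iff: "M2 a b c e \<in> UG cj \<longleftrightarrow>
   cj a * c + cj c * a = 0 \<and> cj a * e + cj c * b = 1 \<and> cj b * c + cj e * a = 1 \<and>
   cj b * e + cj e * b = 0"
  by (simp add: UG_def wmat_def)

lemma setprodI: "t \<in> A \<Longrightarrow> j \<in> B \<Longrightarrow> mmul t j \<in> setprod A B"
  unfolding setprod_def by blast

lemma TX_subset_Kc: "TX cj v X \<subseteq> Kc cj v"
  unfolding TX_def by auto

context unram_field
begin

lemma mstar_mmul: "mstar cj (mmul a b) = mmul (mstar cj b) (mstar cj a)"
  by (cases a; cases b) (simp add: algebra_simps)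

lemma UG_mmul: "a \<in> UG cj \<Longrightarrow> b \<in> UG cj \<Longrightarrow> mmul a b \<in> UG cj"
  unfolding UG_def by (simp add: mstar_mmul mmul_assoc) (metis mmul_assoc)

lemma entries_in_mmul:
  "entries_in (inP v 0) a \<Longrightarrow> entries_in (inP v 0) b \<Longrightarrow> entries_in (inP v 0) (mmul a b)"
  by (cases a; cases b) (auto intro!: inP_add inP_mult_left)

lemma Kc_mmul: "a \<in> Kc cj v \<Longrightarrow> b \<in> Kc cj v \<Longrightarrow> mmul a b \<in> Kc cj v"
  unfolding Kc_def using UG_mmul entries_in_mmul by blast

definition diag_unit :: "'a \<Rightarrow> 'a m2" where
  "diag_unit \<mu> = M2 \<mu> 0 0 (inverse (cj \<mu>))"

lemma diag_unit_Kc: "\<mu> \<noteq> 0 \<Longrightarrow> v \<mu> = 0 \<Longrightarrow> diag_unit \<mu> \<in> Kc cj v"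
  by (simp add: diag_unit_def Kc_def UG_iff inP_def v_inverse)

lemma diag_unit_inverse: "\<mu> \<noteq> 0 \<Longrightarrow> mmul (diag_unit \<mu>) (diag_unit (inverse \<mu>)) = mI"
  by (simp add: diag_unit_def mI_def)

lemma diag_unit_conj: "\<mu> \<noteq> 0 \<Longrightarrow>
    mmul (diag_unit \<mu>) (mmul (M2 a b c e) (diag_unit (inverse \<mu>))) =
    M2 a (\<mu> * b * cj \<mu>) (c / (\<mu> * cj \<mu>)) e"
  by (simp add: diag_unit_def field_simps)

end

locale level = unram_field +
  fixes d :: nat
  assumes d_pos: "0 < d"
begin

definition "n1 = (int d + 1) div 2"
definition "n2 = (int d + 2) div 2"

lemma levels: "n1 + n2 = int d + 1" "1 \<le> n1" "n1 \<le> n2"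
  using d_pos unfolding n1_def n2_def by presburger+

lemma Jd_iff: "M2 a b c e \<in> Jd cj v d \<longleftrightarrow> M2 a b c e \<in> UG cj \<and>
    inP v n1 (a - 1) \<and> inP v n1 b \<and> inP v n2 c \<and> inP v n1 (e - 1)"
  by (simp add: Jd_def n1_def n2_def)

lemma Jd_subset_Kc: "Jd cj v d \<subseteq> Kc cj v"
proof
  fix j assume "j \<in> Jd cj v d"
  moreover obtain a b c e where "j = M2 a b c e" by (cases j)
  ultimately show "j \<in> Kc cj v"
    using levels inP_mono[of 0 n1] inP_mono[of 0 n2] inP_of_congr_1[of n1]
    by (auto simp: Jd_iff Kc_def)
qed

lemma setprod_subset_Kc: "setprod (TX cj v X) (Jd cj v d) \<subseteq> Kc cj v"
  unfolding setprod_def using TX_subset_Kc Jd_subset_Kc Kc_mmul by blast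

text \<open>The common value of \<open>T(X)J\<^sub>d\<close> and \<open>T(Y)J\<^sub>d\<close>.\<close>
definition Hd :: "'a m2 set" where
  "Hd = {h \<in> Kc cj v. case h of M2 a b c e \<Rightarrow> inP v n2 c \<and> inP v n1 (a - e)}"

lemma Hd_iff: "M2 a b c e \<in> Hd \<longleftrightarrow> M2 a b c e \<in> Kc cj v \<and> inP v n2 c \<and> inP v n1 (a - e)"
  by (simp add: Hd_def)

lemma Hd_norm_one_congr:
  assumes "M2 A B C E \<in> Hd"
  shows "\<exists>a0. a0 * cj a0 = 1 \<and> inP v n1 (a0 - E)"
proof (rule exists_norm_one_congr)
  have U: "cj A * E + cj C * B = 1" and I: "inP v 0 B" "inP v 0 E"
    and C: "inP v n2 C" and AE: "inP v n1 (A - E)"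
    using assms by (auto simp: Hd_iff Kc_def UG_iff)
  have "E * cj E - 1 = cj (E - A) * E - cj C * B" using U by (simp add: algebra_simps)
  moreover have "inP v n1 (E - A)" using AE inP_diff_commute by blast
  then have "inP v n1 (cj (E - A) * E)" by (intro inP_mult_right[OF _ I(2)]) (simp only: inP_cj)
  moreover have "inP v n1 (cj C * B)" using inP_mult_le[OF _ I(1)] C levels(3) by simp
  ultimately show "inP v n1 (E * cj E - 1)" using inP_diff by simp
  show "inP v 0 E" by (rule I(2))
qed

lemma Hd_conj_diag_unit:
  assumes \<mu>: "\<mu> \<noteq> 0" "v \<mu> = 0" and h: "h \<in> Hd"
  shows "mmul (diag_unit \<mu>) (mmul h (diag_unit (inverse \<mu>))) \<in> Hd"
proof -
  obtain a b c e where h_eq: "h = M2 a b c e" by (cases h)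
  have "mmul (diag_unit \<mu>) (mmul h (diag_unit (inverse \<mu>))) \<in> Kc cj v"
    using h \<mu> by (intro Kc_mmul diag_unit_Kc) (auto simp: Hd_def v_inverse)
  moreover have "inP v n2 (c / (\<mu> * cj \<mu>))"
    using h \<mu> inP_divide_unit_iff[of "\<mu> * cj \<mu>"] by (simp add: h_eq Hd_iff v_mult)
  ultimately show ?thesis using h \<mu> by (simp add: h_eq Hd_iff diag_unit_conj)
qed

section \<open>The nilpotent element\<close>

definition Xn :: "'a m2" where
  "Xn = M2 0 (inverse (varpi ^ d) * s) 0 0"

lemma TX_Xn_shape:
  assumes "k \<in> TX cj v Xn"
  obtains a b where "k = M2 a b 0 a" "a * cj a = 1" "inP v 0 a" "inP v 0 b"
proof -
  obtain a b c e where k: "k = M2 a b c e" by (cases k)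
  have K: "k \<in> Kc cj v" "mmul k Xn = mmul Xn k" using assms unfolding TX_def by auto
  then have "c = 0" "a = e" unfolding k Xn_def by auto
  with K(1) show ?thesis using that unfolding k Kc_def by (auto simp: UG_iff mult.commute add.commute)
qed

lemma TX_Xn_Jd_subset_Hd: "setprod (TX cj v Xn) (Jd cj v d) \<subseteq> Hd"
proof
  fix h assume h: "h \<in> setprod (TX cj v Xn) (Jd cj v d)"
  then obtain t j where tj: "t \<in> TX cj v Xn" "j \<in> Jd cj v d" "h = mmul t j"
    unfolding setprod_def by blast
  obtain a b where t: "t = M2 a b 0 a" "inP v 0 a" "inP v 0 b"
    using TX_Xn_shape[OF tj(1)] by blast
  obtain a' b' c' e' where j: "j = M2 a' b' c' e'" by (cases j)
  have J: "inP v n1 (a' - 1)" "inP v n2 c'" "inP v n1 (e' - 1)"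
    using tj(2) unfolding j Jd_iff by auto
  have eq: "a * a' + b * c' - a * e' = a * (a' - 1) + b * c' - a * (e' - 1)"
    by (simp add: algebra_simps)
  have "inP v n1 (a * (a' - 1) + b * c' - a * (e' - 1))"
    using inP_diff[OF inP_add[OF inP_mult_left[OF t(2) J(1)] inP_mult_le[OF t(3) J(2)]]
      inP_mult_left[OF t(2) J(3)]] levels(3) by simp
  then have "inP v n1 (a * a' + b * c' - a * e')" unfolding eq .
  moreover have "h \<in> Kc cj v" using h setprod_subset_Kc by blast
  ultimately show "h \<in> Hd"
    using inP_mult_left[OF t(2) J(2)] by (simp add: tj(3) t j Hd_iff)
qed

lemma Hd_entries:
  assumes h: "M2 A B C E \<in> Hd" and a0: "a0 * cj a0 = 1" "inP v n1 (a0 - E)"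
  shows "E \<noteq> 0" "v E = 0" "inP v 0 (B / E)" "cj B / cj E = - (B / E)"
proof -
  have U: "cj B * E + cj E * B = 0" and B: "inP v 0 B"
    using h by (auto simp: Hd_iff Kc_def UG_iff)
  have a0u: "a0 \<noteq> 0" "v a0 = 0" using norm_one_unit[OF a0(1)] by auto
  show E: "E \<noteq> 0" "v E = 0"
    using unit_congr[OF a0u, of E] inP_mono[OF levels(2) a0(2)] inP_diff_commute by blast+
  show "inP v 0 (B / E)" using inP_divide_unit_iff[OF E] B by simp
  show "cj B / cj E = - (B / E)" using U E by (simp add: field_simps eq_neg_iff_add_eq_0)
qed

lemma TX_Xn_memI:
  assumes a0: "a0 * cj a0 = 1" and b: "inP v 0 b" "cj b = - b"
  shows "M2 a0 (a0 * b) 0 a0 \<in> TX cj v Xn"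
proof -
  have "inP v 0 a0" using inP_unit norm_one_unit[OF a0] by blast
  moreover have "cj (a0 * b) * a0 + cj a0 * (a0 * b) = 0" using b(2) by (simp add: algebra_simps)
  ultimately show ?thesis
    using a0 b(1) inP_mult_left by (simp add: TX_def Kc_def UG_iff Xn_def mult.commute)
qed

lemma TX_Xn_inverse_mult_Jd:
  assumes h: "M2 A B C E \<in> Hd" and a0: "a0 * cj a0 = 1" "inP v n1 (a0 - E)"
  shows "mmul (M2 (inverse a0) (- (B / E) / a0) 0 (inverse a0)) (M2 A B C E) \<in> Jd cj v d"
proof -
  obtain E: "E \<noteq> 0" "v E = 0" and b: "inP v 0 (B / E)" "cj B / cj E = - (B / E)"
    using Hd_entries[OF h a0] by blast
  have K: "M2 A B C E \<in> Kc cj v" and C: "inP v n2 C" and AE: "inP v n1 (A - E)"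
    using h unfolding Hd_iff by auto
  have a0u: "a0 \<noteq> 0" "v a0 = 0" and ca0: "cj a0 = inverse a0"
    using norm_one_unit[OF a0(1)] norm_one_cj[OF a0(1)] by auto
  have "cj (- (B / E) / a0) * inverse a0 + cj (inverse a0) * (- (B / E) / a0) =
      - (cj B / cj E + B / E) / (a0 * cj a0)"
    using a0u by (simp add: field_simps)
  also have "\<dots> = 0" using b(2) by simp
  finally have "M2 (inverse a0) (- (B / E) / a0) 0 (inverse a0) \<in> UG cj"
    unfolding UG_iff using ca0 a0u by simp
  then have "mmul (M2 (inverse a0) (- (B / E) / a0) 0 (inverse a0)) (M2 A B C E) \<in> UG cj"
    using K UG_mmul unfolding Kc_def by blast
  moreover have "mmul (M2 (inverse a0) (- (B / E) / a0) 0 (inverse a0)) (M2 A B C E) =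
      M2 ((A - B / E * C) / a0) 0 (C / a0) (E / a0)"
    using a0u E by (simp add: field_simps)
  moreover have "inP v n1 (A - a0 - B / E * C)"
  proof (rule inP_diff)
    show "inP v n1 (A - a0)" using inP_diff[OF AE a0(2)] by simp
    show "inP v n1 (B / E * C)" using inP_mult_le[OF b(1) C, of n1] levels(3) by simp
  qed
  moreover have "(A - B / E * C) / a0 - 1 = (A - a0 - B / E * C) / a0" "E / a0 - 1 = - (a0 - E) / a0"
    using a0u by (simp_all add: field_simps)
  ultimately show ?thesis
    using inP_divide_unit_iff[OF a0u] C a0(2) inP_diff_commute by (simp add: Jd_iff)
qed

lemma Hd_subset_TX_Xn_Jd: "Hd \<subseteq> setprod (TX cj v Xn) (Jd cj v d)"
proof
  fix h assume h: "h \<in> Hd"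
  obtain A B C E where h_eq: "h = M2 A B C E" by (cases h)
  obtain a0 where a0: "a0 * cj a0 = 1" "inP v n1 (a0 - E)"
    using Hd_norm_one_congr h unfolding h_eq by blast
  have "a0 \<noteq> 0" "E \<noteq> 0" using norm_one_unit[OF a0(1)] Hd_entries(1)[OF h[unfolded h_eq] a0] by auto
  then have "h = mmul (M2 a0 (a0 * (B / E)) 0 a0)
      (mmul (M2 (inverse a0) (- (B / E) / a0) 0 (inverse a0)) (M2 A B C E))"
    unfolding h_eq by (simp add: field_simps)
  moreover have "cj (B / E) = - (B / E)" using Hd_entries(4)[OF h[unfolded h_eq] a0] by simp
  then have "M2 a0 (a0 * (B / E)) 0 a0 \<in> TX cj v Xn"
    using TX_Xn_memI[OF a0(1)] Hd_entries(3)[OF h[unfolded h_eq] a0] by blast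
  ultimately show "h \<in> setprod (TX cj v Xn) (Jd cj v d)"
    using TX_Xn_inverse_mult_Jd[OF h[unfolded h_eq] a0] setprodI by metis
qed

lemma TX_Xn_Jd_eq_Hd: "setprod (TX cj v Xn) (Jd cj v d) = Hd"
  using TX_Xn_Jd_subset_Hd Hd_subset_TX_Xn_Jd by blast

end

lemma PsiXz_factor:
  assumes "h \<in> setprod (TX cj v X) (Jd cj v d)"
  obtains t j where "t \<in> TX cj v X" "j \<in> Jd cj v d" "h = mmul t j"
    "PsiXz cj v \<psi> d X \<zeta> h = \<zeta> t * PsiX \<psi> X j"
proof -
  let ?P = "\<lambda>p. fst p \<in> TX cj v X \<and> snd p \<in> Jd cj v d \<and> h = mmul (fst p) (snd p)"
  have "\<exists>p. ?P p" using assms unfolding setprod_def by auto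
  then have "?P (SOME p. ?P p)" by (rule someI_ex)
  then show ?thesis using that unfolding PsiXz_def Let_def by blast
qed

locale depth_zero_central_char = level +
  fixes \<psi> :: "'a \<Rightarrow> complex" and \<chi> :: "'a m2 \<Rightarrow> complex"
  assumes psi: "psi_ok v \<psi>"
    and chi: "is_char_on (Ttor cj) \<chi>"
    and theta0: "\<forall>z\<in>Zfil1 cj v. \<chi> z = 1"
begin

lemma psi_trivial: "inP v 1 x \<Longrightarrow> \<psi> x = 1"
  using psi unfolding psi_ok_def by blast

lemma psi_congr: "inP v 1 (x - y) \<Longrightarrow> \<psi> x = \<psi> y"
proof -
  assume xy: "inP v 1 (x - y)"
  have "\<psi> x = \<psi> y * \<psi> (x - y)" using psi unfolding psi_ok_def by (metis add.commute diff_add_cancel)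
  then show ?thesis using psi_trivial[OF xy] by simp
qed

lemma chi_mult: "x \<in> Ttor cj \<Longrightarrow> y \<in> Ttor cj \<Longrightarrow> \<chi> (mmul x y) = \<chi> x * \<chi> y"
  using chi unfolding is_char_on_def by blast

lemma scalar_Ttor: "a * cj a = 1 \<Longrightarrow> M2 a 0 0 a \<in> Ttor cj"
  unfolding Ttor_def by (auto intro!: exI[of _ a] simp: inverse_unique mult.commute)

definition \<theta>ext :: "'a m2 \<Rightarrow> complex" where
  "\<theta>ext k = \<chi> (M2 (m11 k) 0 0 (m11 k))"

lemma PsiXz_Xn:
  assumes h: "M2 h11 h12 h21 h22 \<in> Hd"
    and a0: "a0 * cj a0 = 1" "inP v n1 (a0 - h22)"
  shows "PsiXz cj v \<psi> d Xn \<theta>ext (M2 h11 h12 h21 h22) =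
    \<chi> (M2 a0 0 0 a0) * \<psi> (inverse (varpi ^ d) * s * h21 / a0)"
proof -
  let ?nX = "inverse (varpi ^ d) * s"
  obtain t j where tj: "t \<in> TX cj v Xn" "j \<in> Jd cj v d" "M2 h11 h12 h21 h22 = mmul t j"
    and val: "PsiXz cj v \<psi> d Xn \<theta>ext (M2 h11 h12 h21 h22) = \<theta>ext t * PsiX \<psi> Xn j"
    using PsiXz_factor h TX_Xn_Jd_eq_Hd by blast
  obtain a b where t: "t = M2 a b 0 a" "a * cj a = 1" "inP v 0 a"
    using TX_Xn_shape[OF tj(1)] by blast
  obtain a' b' c' e' where j: "j = M2 a' b' c' e'" by (cases j)
  have J: "inP v n2 c'" "inP v n1 (e' - 1)" using tj(2) unfolding j Jd_iff by auto
  have h21: "h21 = a * c'" and h22: "h22 = a * e'" using tj(3) unfolding t j by auto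
  have a0u: "a0 \<noteq> 0" "v a0 = 0" using norm_one_unit[OF a0(1)] by auto
  have eq: "a - a0 = - (a * (e' - 1) + (a0 - h22))" unfolding h22 by (simp add: algebra_simps)
  have aa0: "inP v n1 (a - a0)"
    unfolding eq inP_neg by (rule inP_add[OF inP_mult_left[OF t(3) J(2)] a0(2)])
  define \<rho> where "\<rho> = a / a0"
  have \<rho>: "\<rho> * cj \<rho> = 1" unfolding \<rho>_def using t(2) a0(1) by (simp add: field_simps)
  have "\<rho> - 1 = (a - a0) / a0" unfolding \<rho>_def using a0u by (simp add: field_simps)
  then have "inP v 1 (\<rho> - 1)"
    using inP_mono[OF levels(2) aa0] inP_divide_unit_iff[OF a0u] by simp
  then have "\<chi> (M2 \<rho> 0 0 \<rho>) = 1" using theta0 \<rho> unfolding Zfil1_def by blast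
  moreover have "M2 a 0 0 a = mmul (M2 a0 0 0 a0) (M2 \<rho> 0 0 \<rho>)" unfolding \<rho>_def using a0u by simp
  ultimately have \<theta>: "\<theta>ext t = \<chi> (M2 a0 0 0 a0)"
    using chi_mult[OF scalar_Ttor[OF a0(1)] scalar_Ttor[OF \<rho>]] by (simp add: \<theta>ext_def t(1))
  have "?nX * c' - ?nX * h21 / a0 = (?nX * c') * (a0 - a) / a0"
    unfolding h21 using a0u by (simp add: field_simps)
  moreover have "inP v 1 ((?nX * c') * (a0 - a))"
  proof -
    have "inP v (- int d) ?nX" by (simp add: inP_def v_mult v_inverse v_power)
    then have "inP v (- int d + n2) (?nX * c')" using inP_mult J(1) by blast
    moreover have "inP v n1 (a0 - a)" using aa0 inP_diff_commute by blast
    ultimately show ?thesis using inP_mult_le levels(1) by fastforce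
  qed
  ultimately have "\<psi> (?nX * c') = \<psi> (?nX * h21 / a0)"
    using inP_divide_unit_iff[OF a0u] psi_congr by simp
  then show ?thesis using val \<theta> by (simp add: j PsiX_def Xn_def mI_def)
qed

end

section \<open>The semisimple element\<close>

locale min_depth_char = depth_zero_central_char cj v varpi s d \<psi> \<chi>
  for cj :: "'a::field \<Rightarrow> 'a" and v varpi s d \<psi> \<chi> +
  fixes r :: nat and x1 x2 :: 'a
  assumes rpos: "0 < r"
    and depth: "min_depth cj v \<chi> r"
    and xF1: "cj x1 = x1" and xF2: "cj x2 = x2"
    and xr: "inP v (- int r) (x1 + x2 * s)"
    and realizes: "\<forall>t\<in>Tfil cj v (int r div 2 + 1).
        \<chi> t = \<psi> (mtrace (mmul (M2 (x1 + x2 * s) 0 0 (- cj (x1 + x2 * s))) (msub t mI)))"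
    and dbig: "2 * r < d"
begin

lemma levels_r: "int r + 1 \<le> n1" "n2 \<le> 2 * (int d - int r)" "n1 \<le> int d - int r"
  "1 \<le> int d - 2 * int r" "1 \<le> int r"
  using dbig rpos unfolding n1_def n2_def by presburger+

lemma x1_bound: "inP v (- int r) x1" and x2s_bound: "inP v (- int r) (x2 * s)"
proof -
  have c: "inP v (- int r) (x1 - x2 * s)" using xr inP_cj[of "- int r" "x1 + x2 * s"] xF1 xF2 by simp
  have "x1 = ((x1 + x2 * s) + (x1 - x2 * s)) / 2" "x2 * s = ((x1 + x2 * s) - (x1 - x2 * s)) / 2"
    by (simp_all add: field_simps)
  then show "inP v (- int r) x1" "inP v (- int r) (x2 * s)"
    using inP_add[OF xr c] inP_diff[OF xr c] inP_divide_unit_iff[OF two_neq_zero v_two] by metis+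
qed

text \<open>If \<open>x\<^sub>1 = 0\<close>, then \<open>\<Gamma>\<close> would realize a character trivial on the depth-\<open>r\<close> part of the split
  torus, contradicting minimal depth.\<close>
lemma x1_nonzero: "x1 \<noteq> 0"
proof
  assume x0: "x1 = 0"
  obtain t where t: "t \<in> Sfil cj v (int r)" "\<chi> t \<noteq> 1" using depth unfolding min_depth_def by blast
  then obtain a where a: "t = M2 a 0 0 (inverse a)" "a \<noteq> 0" "cj a = a" "inP v (int r) (a - 1)"
    unfolding Sfil_def by blast
  have au: "v a = 0" using unit_congr[of 1 a] inP_mono[OF _ a(4)] levels_r(5) by simp
  have "t \<in> Tfil cj v (int r div 2 + 1)"
    unfolding Tfil_def using a inP_mono[OF _ a(4), of "int r div 2 + 1"] levels_r(5) by auto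
  then have "\<chi> t = \<psi> (mtrace (mmul (M2 (x1 + x2 * s) 0 0 (- cj (x1 + x2 * s))) (msub t mI)))"
    using realizes by blast
  also have "mtrace (mmul (M2 (x1 + x2 * s) 0 0 (- cj (x1 + x2 * s))) (msub t mI)) =
      (x2 * s) * ((a - 1) * (a - 1)) * inverse a"
    using a x0 xF2 by (simp add: mI_def field_simps)
  also have "\<psi> \<dots> = 1"
  proof (rule psi_trivial)
    have "inP v (- int r + (int r + int r)) ((x2 * s) * ((a - 1) * (a - 1)))"
      by (rule inP_mult[OF x2s_bound inP_mult[OF a(4) a(4)]])
    then have "inP v 1 ((x2 * s) * ((a - 1) * (a - 1)))" using inP_mono levels_r(5) by fastforce
    then show "inP v 1 ((x2 * s) * ((a - 1) * (a - 1)) * inverse a)"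
      using inP_mult_right[OF _ inP_inverse_unit[OF a(2) au]] by simp
  qed
  finally show False using t(2) by simp
qed

definition "\<gamma> = x1 * varpi ^ d * s"
definition "y12 = inverse (varpi ^ d * s)"
definition "gd = M2 1 (- (1/2) * inverse \<gamma>) \<gamma> (1/2)"
definition "Y = mmul gd (mmul (M2 (x1 + x2 * s) 0 0 (- cj (x1 + x2 * s))) (minv gd))"
definition "\<zeta> t = \<chi> (mmul (minv gd) (mmul t gd))"

lemma gamma: "\<gamma> \<noteq> 0" "cj \<gamma> = - \<gamma>" "inP v (int d - int r) \<gamma>"
proof -
  show "\<gamma> \<noteq> 0" "cj \<gamma> = - \<gamma>" unfolding \<gamma>_def using x1_nonzero xF1 by simp_all
  have "inP v (- int r + int d) (x1 * varpi ^ d)"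
    by (rule inP_mult[OF x1_bound]) (simp add: inP_def v_power)
  then show "inP v (int d - int r) \<gamma>" unfolding \<gamma>_def using inP_mult_unit_iff[of s] by simp
qed

lemma y12: "y12 \<noteq> 0" "inP v (- int d) y12" "\<gamma> * x1 = y12 * (\<gamma> * \<gamma>)"
  unfolding y12_def \<gamma>_def by (auto simp: inP_def v_mult v_inverse v_power) (simp add: field_simps)

lemma Y_eq: "Y = M2 (x2 * s) y12 (\<gamma> * x1) (x2 * s)"
  unfolding Y_def gd_def y12_def using gamma xF1 xF2 x1_nonzero
  by (simp add: Let_def field_simps \<gamma>_def)

lemma TX_Y_shape:
  assumes "k \<in> TX cj v Y"
  obtains A B where "k = M2 A B (\<gamma> * \<gamma> * B) A" "cj A * A + \<gamma> * \<gamma> * (cj B * B) = 1"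
    "cj A * B + cj B * A = 0" "inP v 0 A" "inP v 0 B"
proof -
  obtain a b c e where k: "k = M2 a b c e" by (cases k)
  have K: "k \<in> Kc cj v" "mmul k Y = mmul Y k" using assms unfolding TX_def by auto
  from K(2) have e1: "a * (x2 * s) + b * (\<gamma> * x1) = x2 * s * a + y12 * c"
    and e2: "a * y12 + b * (x2 * s) = x2 * s * b + y12 * e" unfolding k Y_eq by auto
  from e2 have ae: "a = e" using y12(1) by (simp add: algebra_simps)
  from e1 have "y12 * c = b * (\<gamma> * x1)" by (simp add: algebra_simps)
  also have "\<dots> = y12 * (\<gamma> * \<gamma> * b)" unfolding y12(3) by (simp add: algebra_simps)
  finally have c: "c = \<gamma> * \<gamma> * b" using y12(1) by simp
  have "cj a * (\<gamma> * \<gamma> * b) + cj (\<gamma> * \<gamma> * b) * a = 0" "cj a * a + cj (\<gamma> * \<gamma> * b) * b = 1"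
    using K(1) unfolding k c ae Kc_def by (auto simp: UG_iff)
  then have "\<gamma> * \<gamma> * (cj a * b + cj b * a) = 0" "cj a * a + \<gamma> * \<gamma> * (cj b * b) = 1"
    using gamma(2) by (simp_all add: algebra_simps)
  then show ?thesis using that K(1) gamma(1) unfolding k c ae Kc_def by auto
qed

lemma TX_Y_Jd_subset_Hd: "setprod (TX cj v Y) (Jd cj v d) \<subseteq> Hd"
proof
  fix h assume h: "h \<in> setprod (TX cj v Y) (Jd cj v d)"
  then obtain t j where tj: "t \<in> TX cj v Y" "j \<in> Jd cj v d" "h = mmul t j"
    unfolding setprod_def by blast
  obtain A B where t: "t = M2 A B (\<gamma> * \<gamma> * B) A" "inP v 0 A" "inP v 0 B"
    using TX_Y_shape[OF tj(1)] by blast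
  obtain a' b' c' e' where j: "j = M2 a' b' c' e'" by (cases j)
  have J: "inP v n1 (a' - 1)" "inP v n1 b'" "inP v n2 c'" "inP v n1 (e' - 1)"
    using tj(2) unfolding j Jd_iff by auto
  have gB: "inP v (2 * (int d - int r)) (\<gamma> * \<gamma> * B)"
    using inP_mult_right[OF inP_mult[OF gamma(3) gamma(3)] t(3)] by (simp add: algebra_simps)
  have "inP v n2 (\<gamma> * \<gamma> * B * a' + A * c')"
    using inP_add[OF inP_mult_le[OF gB inP_of_congr_1[OF J(1)]] inP_mult_left[OF t(2) J(3)]]
      levels levels_r by simp
  moreover have eq: "A * a' + B * c' - (\<gamma> * \<gamma> * B * b' + A * e') =
      A * (a' - 1) + B * c' - \<gamma> * \<gamma> * B * b' - A * (e' - 1)"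
    by (simp add: algebra_simps)
  have "inP v n1 (A * (a' - 1) + B * c' - \<gamma> * \<gamma> * B * b' - A * (e' - 1))"
    using inP_diff[OF inP_diff[OF inP_add[OF inP_mult_left[OF t(2) J(1)] inP_mult_le[OF t(3) J(3)]]
      inP_mult_le[OF gB J(2)]] inP_mult_left[OF t(2) J(4)]] levels levels_r by simp
  then have "inP v n1 (A * a' + B * c' - (\<gamma> * \<gamma> * B * b' + A * e'))" unfolding eq .
  moreover have "h \<in> Kc cj v" using h setprod_subset_Kc by blast
  ultimately show "h \<in> Hd" by (simp add: tj(3) t j Hd_iff algebra_simps)
qed

lemma minv_gd: "minv gd = M2 (1/2) (inverse \<gamma> / 2) (- \<gamma>) 1"
  unfolding gd_def using gamma(1) by (simp add: Let_def field_simps)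

lemma gd_inverse: "mmul gd (minv gd) = mI" "mmul (minv gd) gd = mI"
  unfolding minv_gd unfolding gd_def mI_def using gamma(1) by (simp_all add: field_simps)

lemma gd_UG: "gd \<in> UG cj" "minv gd \<in> UG cj"
  unfolding minv_gd unfolding gd_def UG_iff using gamma(1,2) by (simp_all add: field_simps)

definition torus_Y :: "'a \<Rightarrow> 'a m2" where
  "torus_Y \<alpha> = mmul gd (mmul (diag_unit \<alpha>) (minv gd))"

lemma torus_Y_mult: "torus_Y (\<alpha> * \<beta>) = mmul (torus_Y \<alpha>) (torus_Y \<beta>)"
proof -
  have "diag_unit (\<alpha> * \<beta>) = mmul (diag_unit \<alpha>) (diag_unit \<beta>)"
    by (simp add: diag_unit_def inverse_mult_distrib)
  then show ?thesis
    unfolding torus_Y_def by (simp add: mmul_assoc gd_inverse(2) flip: mmul_assoc[of "minv gd" gd])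
qed

lemma torus_Y_1: "torus_Y 1 = mI"
  unfolding torus_Y_def diag_unit_def by (simp add: gd_inverse(1) flip: mI_def)

lemma torus_Y_UG: "\<alpha> \<noteq> 0 \<Longrightarrow> torus_Y \<alpha> \<in> UG cj"
  unfolding torus_Y_def using gd_UG by (intro UG_mmul) (auto simp: diag_unit_def UG_iff)

lemma torus_Y_commute: "mmul (torus_Y \<alpha>) Y = mmul Y (torus_Y \<alpha>)"
proof -
  let ?\<Gamma> = "M2 (x1 + x2 * s) 0 0 (- cj (x1 + x2 * s))"
  have "mmul (diag_unit \<alpha>) ?\<Gamma> = mmul ?\<Gamma> (diag_unit \<alpha>)"
    by (simp add: diag_unit_def mult.commute)
  then show ?thesis
    unfolding torus_Y_def Y_def
    by (simp add: mmul_assoc gd_inverse(2) flip: mmul_assoc[of "minv gd" gd]) (metis mmul_assoc)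
qed

lemma torus_Y_eq:
  "torus_Y \<alpha> = M2 ((\<alpha> + inverse (cj \<alpha>)) / 2) ((\<alpha> - inverse (cj \<alpha>)) / (2 * \<gamma>))
     (\<gamma> * \<gamma> * ((\<alpha> - inverse (cj \<alpha>)) / (2 * \<gamma>))) ((\<alpha> + inverse (cj \<alpha>)) / 2)"
  unfolding torus_Y_def minv_gd unfolding gd_def diag_unit_def using gamma(1)
  by (simp add: field_simps)

lemma gamma_mult_bound: "inP v 0 b \<Longrightarrow> inP v (int d - int r) (\<gamma> * b)"
  using inP_mult_right[OF gamma(3)] by blast

lemma one_plus_gamma_unit: "inP v 0 b \<Longrightarrow> 1 + \<gamma> * b \<noteq> 0 \<and> v (1 + \<gamma> * b) = 0"
  using unit_congr[of 1 "1 + \<gamma> * b"] inP_mono[OF _ gamma_mult_bound] levels_r by simp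

lemma torus_Y_unit_times:
  assumes a0: "a0 * cj a0 = 1" and u: "u = 1 + \<gamma> * b" "u \<noteq> 0" "cj u = u"
  shows "torus_Y (a0 * u) = M2 (a0 * (u + inverse u) / 2) (a0 * b * (2 + \<gamma> * b) / (2 * u))
      (\<gamma> * \<gamma> * (a0 * b * (2 + \<gamma> * b) / (2 * u))) (a0 * (u + inverse u) / 2)"
    and "torus_Y (inverse (a0 * u)) = M2 ((u + inverse u) / (2 * a0)) (- (b * (2 + \<gamma> * b) / (2 * a0 * u)))
      (\<gamma> * \<gamma> * (- (b * (2 + \<gamma> * b) / (2 * a0 * u)))) ((u + inverse u) / (2 * a0))"
proof -
  have ca0: "cj a0 = inverse a0" using norm_one_cj[OF a0] .
  have "a0 \<noteq> 0" "\<gamma> * b = u - 1" using norm_one_unit[OF a0] u(1) by auto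
  then show "torus_Y (a0 * u) = M2 (a0 * (u + inverse u) / 2) (a0 * b * (2 + \<gamma> * b) / (2 * u))
      (\<gamma> * \<gamma> * (a0 * b * (2 + \<gamma> * b) / (2 * u))) (a0 * (u + inverse u) / 2)"
    and "torus_Y (inverse (a0 * u)) = M2 ((u + inverse u) / (2 * a0)) (- (b * (2 + \<gamma> * b) / (2 * a0 * u)))
      (\<gamma> * \<gamma> * (- (b * (2 + \<gamma> * b) / (2 * a0 * u)))) ((u + inverse u) / (2 * a0))"
    unfolding torus_Y_eq using gamma(1) u(2,3)
    by (simp_all add: ca0 field_simps) (simp_all add: u(1) algebra_simps)
qed

lemma torus_Y_TX:
  assumes a0: "a0 * cj a0 = 1" and b: "inP v 0 b" "cj (\<gamma> * b) = \<gamma> * b"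
  shows "torus_Y (a0 * (1 + \<gamma> * b)) \<in> TX cj v Y"
proof -
  define u where "u = 1 + \<gamma> * b"
  have u: "u \<noteq> 0" "v u = 0" "cj u = u" using one_plus_gamma_unit[OF b(1)] b(2) by (simp_all add: u_def)
  have a0u: "a0 \<noteq> 0" "v a0 = 0" using norm_one_unit[OF a0] by auto
  have int: "inP v 0 a0" "inP v 0 u" "inP v 0 (inverse u)" "inP v 0 (\<gamma> * b)"
    using a0u u inP_unit inP_inverse_unit inP_mono[OF _ gamma_mult_bound[OF b(1)]] levels_r by auto
  have gg: "inP v 0 (\<gamma> * \<gamma>)" using inP_mult_le[OF gamma(3) gamma(3), of 0] levels_r by simp
  moreover have "inP v 0 (a0 * (u + inverse u) / 2)"
    using inP_mult_left[OF int(1) inP_add[OF int(2,3)]] inP_divide_unit_iff[of 2] by simp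
  moreover have B: "inP v 0 (a0 * b * (2 + \<gamma> * b) / (2 * u))"
    using inP_mult_left[OF inP_mult_left[OF int(1) b(1)] inP_add[OF _ int(4)]] u
      inP_divide_unit_iff[of "2 * u"] by (simp add: inP_unit v_mult)
  moreover have "inP v 0 (\<gamma> * \<gamma> * (a0 * b * (2 + \<gamma> * b) / (2 * u)))"
    by (rule inP_mult_left[OF gg B])
  ultimately have "entries_in (inP v 0) (torus_Y (a0 * u))"
    unfolding torus_Y_unit_times(1)[OF a0 u_def u(1,3)] by (simp only: entries_in.simps)
  then show ?thesis
    using torus_Y_UG[of "a0 * u"] torus_Y_commute a0u u unfolding TX_def Kc_def u_def by simp
qed

lemma Hd_entries_gamma:
  assumes "M2 A B C E \<in> Hd" "a0 * cj a0 = 1" "inP v n1 (a0 - E)"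
  shows "cj (\<gamma> * (B / E)) = \<gamma> * (B / E)"
proof -
  have "cj (\<gamma> * (B / E)) = cj \<gamma> * (cj B / cj E)" by simp
  then show ?thesis using Hd_entries(4)[OF assms] gamma(2) by simp
qed

lemma torus_Y_inverse_shape:
  assumes a0: "a0 * cj a0 = 1" and b: "inP v 0 b" "cj (\<gamma> * b) = \<gamma> * b"
  obtains A' B' where "torus_Y (inverse (a0 * (1 + \<gamma> * b))) = M2 A' B' (\<gamma> * \<gamma> * B') A'"
    "inP v n1 (A' - inverse a0)" "inP v 0 B'" "inP v n1 (A' * b + B')"
proof -
  define u where "u = 1 + \<gamma> * b"
  have u: "u \<noteq> 0" "v u = 0" "cj u = u" using one_plus_gamma_unit[OF b(1)] b(2) by (simp_all add: u_def)
  have a0u: "a0 \<noteq> 0" "v a0 = 0" using norm_one_unit[OF a0] by auto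
  have \<kappa>: "inP v (int d - int r) (\<gamma> * b)" by (rule gamma_mult_bound[OF b(1)])
  define A' where "A' = (u + inverse u) / (2 * a0)"
  define B' where "B' = - (b * (2 + \<gamma> * b) / (2 * a0 * u))"
  have "torus_Y (inverse (a0 * u)) = M2 A' B' (\<gamma> * \<gamma> * B') A'"
    unfolding A'_def B'_def by (rule torus_Y_unit_times(2)[OF a0 u_def u(1,3)])
  moreover have unit_2a0u: "2 * a0 * u \<noteq> 0" "v (2 * a0 * u) = 0" using a0u u by (simp_all add: v_mult)
  have "\<gamma> * b = u - 1" by (simp add: u_def)
  then have A': "A' - inverse a0 = (\<gamma> * b) * (\<gamma> * b) / (2 * a0 * u)"
    "A' * b + B' = b * (\<gamma> * b) / (2 * a0)"
    unfolding A'_def B'_def using a0u u(1) by (simp_all add: field_simps) (simp_all add: u_def algebra_simps)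
  have "inP v n1 (A' - inverse a0)"
    unfolding A'(1) inP_divide_unit_iff[OF unit_2a0u] using inP_mult_le[OF \<kappa> \<kappa>] levels_r by simp
  moreover have "inP v 0 B'" unfolding B'_def inP_neg inP_divide_unit_iff[OF unit_2a0u]
    using inP_mult_left[OF b(1) inP_add[OF _ inP_mono[OF _ \<kappa>]]] levels_r by (simp add: inP_unit)
  moreover have "inP v n1 (A' * b + B')"
  proof -
    have u2: "2 * a0 \<noteq> 0" "v (2 * a0) = 0" using a0u by (simp_all add: v_mult)
    show ?thesis unfolding A'(2) inP_divide_unit_iff[OF u2]
      by (rule inP_mult_left[OF b(1) inP_mono[OF levels_r(3) \<kappa>]])
  qed
  ultimately show thesis using that unfolding u_def by blast
qed

lemma torus_Y_inverse_Jd: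
  assumes h: "M2 A B C E \<in> Hd" and a0: "a0 * cj a0 = 1" "inP v n1 (a0 - E)"
  shows "mmul (torus_Y (inverse (a0 * (1 + \<gamma> * (B / E))))) (M2 A B C E) \<in> Jd cj v d"
proof -
  obtain E: "E \<noteq> 0" "v E = 0" and b: "inP v 0 (B / E)" "cj (\<gamma> * (B / E)) = \<gamma> * (B / E)"
    using Hd_entries[OF h a0] Hd_entries_gamma[OF h a0] by blast
  obtain A' B' where t': "torus_Y (inverse (a0 * (1 + \<gamma> * (B / E)))) = M2 A' B' (\<gamma> * \<gamma> * B') A'"
    and A'_congr: "inP v n1 (A' - inverse a0)" and B'_int: "inP v 0 B'"
    and j12: "inP v n1 (A' * (B / E) + B')"
    using torus_Y_inverse_shape[OF a0(1) b] by blast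
  have K: "M2 A B C E \<in> Kc cj v" and C: "inP v n2 C" and AE: "inP v n1 (A - E)"
    and I: "inP v 0 A" "inP v 0 B"
    using h by (auto simp: Hd_iff Kc_def)
  have a0u: "a0 \<noteq> 0" "v a0 = 0" using norm_one_unit[OF a0(1)] by auto
  have gg: "inP v n2 (\<gamma> * \<gamma>)" using inP_mult_le[OF gamma(3) gamma(3)] levels_r by simp
  have ia0: "inP v 0 (inverse a0)" by (rule inP_inverse_unit[OF a0u])
  have A'_int: "inP v 0 A'" using inP_add[OF inP_mono[OF _ A'_congr] ia0] levels by simp
  have "mmul (torus_Y (inverse (a0 * (1 + \<gamma> * (B / E))))) (M2 A B C E) \<in> UG cj"
    using K torus_Y_UG a0u one_plus_gamma_unit[OF b(1)] UG_mmul unfolding Kc_def by simp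
  moreover have "inP v n1 (A' * A + B' * C - 1)"
  proof -
    have eq: "A' * A + B' * C - 1 = (A' - inverse a0) * A + inverse a0 * ((A - E) - (a0 - E)) + B' * C"
      using a0u by (simp add: field_simps)
    have "inP v n1 (B' * C)" using inP_mult_left[OF B'_int C] inP_mono levels by blast
    then show ?thesis unfolding eq
      using inP_add[OF inP_add[OF inP_mult_right[OF A'_congr I(1)] inP_mult_left[OF ia0 inP_diff[OF AE a0(2)]]]]
      by blast
  qed
  moreover have "A' * B + B' * E = (A' * (B / E) + B') * E" using E(1) by (simp add: field_simps)
  then have "inP v n1 (A' * B + B' * E)" using inP_mult_right[OF j12 inP_unit[OF E(2)]] by simp
  moreover have "inP v n2 (\<gamma> * \<gamma> * B' * A + A' * C)"
    using inP_add[OF inP_mult_right[OF inP_mult_right[OF gg B'_int] I(1)] inP_mult_left[OF A'_int C]] .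
  moreover have "inP v n1 (\<gamma> * \<gamma> * B' * B + A' * E - 1)"
  proof -
    have eq: "\<gamma> * \<gamma> * B' * B + A' * E - 1 =
        \<gamma> * \<gamma> * B' * B + (A' - inverse a0) * E - inverse a0 * (a0 - E)"
      using a0u by (simp add: field_simps)
    have "inP v n1 (\<gamma> * \<gamma> * B' * B)"
      using inP_mult_right[OF inP_mult_right[OF gg B'_int] I(2)] inP_mono levels by blast
    then show ?thesis unfolding eq
      using inP_diff[OF inP_add[OF _ inP_mult_right[OF A'_congr inP_unit[OF E(2)]]] inP_mult_left[OF ia0 a0(2)]]
      by blast
  qed
  ultimately show ?thesis unfolding t' by (simp add: Jd_iff)
qed

lemma Hd_subset_TX_Y_Jd: "Hd \<subseteq> setprod (TX cj v Y) (Jd cj v d)"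
proof
  fix h assume h: "h \<in> Hd"
  obtain A B C E where h_eq: "h = M2 A B C E" by (cases h)
  obtain a0 where a0: "a0 * cj a0 = 1" "inP v n1 (a0 - E)"
    using Hd_norm_one_congr h unfolding h_eq by blast
  define \<alpha> where "\<alpha> = a0 * (1 + \<gamma> * (B / E))"
  have "1 + \<gamma> * (B / E) \<noteq> 0" "a0 \<noteq> 0"
    using one_plus_gamma_unit[OF Hd_entries(3)[OF h[unfolded h_eq] a0]] norm_one_unit[OF a0(1)] by blast+
  then have "\<alpha> \<noteq> 0" unfolding \<alpha>_def by (metis mult_eq_0_iff)
  then have "h = mmul (torus_Y \<alpha>) (mmul (torus_Y (inverse \<alpha>)) h)"
    by (simp add: mmul_assoc[symmetric] torus_Y_1 flip: torus_Y_mult)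
  moreover have "torus_Y \<alpha> \<in> TX cj v Y"
    unfolding \<alpha>_def using torus_Y_TX a0(1) Hd_entries(3)[OF h[unfolded h_eq] a0]
      Hd_entries_gamma[OF h[unfolded h_eq] a0] by blast
  moreover have "mmul (torus_Y (inverse \<alpha>)) h \<in> Jd cj v d"
    unfolding \<alpha>_def h_eq by (rule torus_Y_inverse_Jd[OF h[unfolded h_eq] a0])
  ultimately show "h \<in> setprod (TX cj v Y) (Jd cj v d)" using setprodI by metis
qed

lemma TX_Y_Jd_eq_Hd: "setprod (TX cj v Y) (Jd cj v d) = Hd"
  using TX_Y_Jd_subset_Hd Hd_subset_TX_Y_Jd by blast

lemma gamma_x1: "inP v 1 (\<gamma> * x1)"
  using inP_mult_le[OF gamma(3) x1_bound, of 1] levels_r by simp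

lemma zeta_eq: "\<zeta> (M2 A B (\<gamma> * \<gamma> * B) A) = \<chi> (M2 (A + \<gamma> * B) 0 0 (A - \<gamma> * B))"
proof -
  have "mmul (minv gd) (mmul (M2 A B (\<gamma> * \<gamma> * B) A) gd) = M2 (A + \<gamma> * B) 0 0 (A - \<gamma> * B)"
    unfolding minv_gd unfolding gd_def using gamma(1) by (simp add: field_simps)
  then show ?thesis unfolding \<zeta>_def by simp
qed

text \<open>Up to the scalar \<open>a0\<close>, the diagonal element \<open>g\<^sub>d\<^sup>-\<^sup>1 t g\<^sub>d\<close> lies in \<open>T\<^sub>r\<^sub>+\<^sub>1\<close>, where \<open>\<chi>\<close> is trivial.\<close>
lemma zeta_TX_Y:
  assumes t: "M2 A B (\<gamma> * \<gamma> * B) A \<in> TX cj v Y" and a0: "a0 * cj a0 = 1" "inP v n1 (A - a0)"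
  shows "\<zeta> (M2 A B (\<gamma> * \<gamma> * B) A) = \<chi> (M2 a0 0 0 a0)"
proof -
  obtain A' B' where "M2 A B (\<gamma> * \<gamma> * B) A = M2 A' B' (\<gamma> * \<gamma> * B') A'"
    "cj A' * A' + \<gamma> * \<gamma> * (cj B' * B') = 1" "cj A' * B' + cj B' * A' = 0" "inP v 0 B'"
    using TX_Y_shape[OF t] by metis
  then have N: "cj A * A + \<gamma> * \<gamma> * (cj B * B) = 1" "cj A * B + cj B * A = 0" and B: "inP v 0 B"
    by auto
  have a0u: "a0 \<noteq> 0" "v a0 = 0" using norm_one_unit[OF a0(1)] by auto
  have "cj (A + \<gamma> * B) * (A - \<gamma> * B) = (cj A * A + \<gamma> * \<gamma> * (cj B * B)) - \<gamma> * (cj A * B + cj B * A)"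
    using gamma(2) by (simp add: algebra_simps)
  then have N1: "cj (A + \<gamma> * B) * (A - \<gamma> * B) = 1" using N by simp
  then have "A + \<gamma> * B \<noteq> 0" by (metis cj_eq_0_iff mult_zero_left zero_neq_one)
  define \<rho> where "\<rho> = (A + \<gamma> * B) / a0"
  have "cj \<rho> * ((A - \<gamma> * B) / a0) = (cj (A + \<gamma> * B) * (A - \<gamma> * B)) / (cj a0 * a0)"
    unfolding \<rho>_def cj_divide by (simp only: times_divide_times_eq)
  also have "\<dots> = 1" using N1 a0(1) by (simp add: mult.commute)
  finally have inv\<rho>: "inverse (cj \<rho>) = (A - \<gamma> * B) / a0" by (rule inverse_unique)
  have \<rho>0: "\<rho> \<noteq> 0" unfolding \<rho>_def using \<open>A + \<gamma> * B \<noteq> 0\<close> a0u by simp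
  have "\<rho> - 1 = ((A - a0) + \<gamma> * B) / a0" unfolding \<rho>_def using a0u by (simp add: field_simps)
  moreover have "inP v (int r + 1) ((A - a0) + \<gamma> * B)"
    using inP_add_le[OF a0(2) gamma_mult_bound[OF B]] levels_r by simp
  ultimately have "inP v (int r + 1) (\<rho> - 1)" using inP_divide_unit_iff[OF a0u] by simp
  then have "\<chi> (diag_unit \<rho>) = 1"
    using depth \<rho>0 unfolding min_depth_def Tfil_def diag_unit_def by blast
  moreover have "M2 (A + \<gamma> * B) 0 0 (A - \<gamma> * B) = mmul (M2 a0 0 0 a0) (diag_unit \<rho>)"
    unfolding diag_unit_def using a0u inv\<rho> by (simp add: \<rho>_def)
  moreover have "diag_unit \<rho> \<in> Ttor cj" unfolding Ttor_def diag_unit_def using \<rho>0 by blast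
  ultimately show ?thesis unfolding zeta_eq using chi_mult[OF scalar_Ttor[OF a0(1)]] by simp
qed

lemma PsiX_Y_Jd:
  assumes "M2 a' b' c' e' \<in> Jd cj v d"
  shows "PsiX \<psi> Y (M2 a' b' c' e') = \<psi> (y12 * c')"
proof -
  have J: "inP v n1 (a' - 1)" "inP v n1 b'" "inP v n1 (e' - 1)"
    using assms unfolding Jd_iff by auto
  have "PsiX \<psi> Y (M2 a' b' c' e') = \<psi> (x2 * s * (a' - 1) + \<gamma> * x1 * b' + x2 * s * (e' - 1) + y12 * c')"
    unfolding PsiX_def Y_eq by (simp add: mI_def algebra_simps)
  also have "\<dots> = \<psi> (y12 * c')"
  proof (rule psi_congr)
    show "inP v 1 (x2 * s * (a' - 1) + \<gamma> * x1 * b' + x2 * s * (e' - 1) + y12 * c' - y12 * c')"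
      using inP_add[OF inP_add[OF inP_mult_le[OF x2s_bound J(1)] inP_mult_le[OF gamma_x1 J(2)]]
        inP_mult_le[OF x2s_bound J(3)]] levels levels_r by simp
  qed
  finally show ?thesis .
qed

lemma PsiXz_Y:
  assumes h: "M2 h11 h12 h21 h22 \<in> Hd"
    and a0: "a0 * cj a0 = 1" "inP v n1 (a0 - h22)"
  shows "PsiXz cj v \<psi> d Y \<zeta> (M2 h11 h12 h21 h22) = \<chi> (M2 a0 0 0 a0) * \<psi> (y12 * h21 / a0)"
proof -
  obtain t j where tj: "t \<in> TX cj v Y" "j \<in> Jd cj v d" "M2 h11 h12 h21 h22 = mmul t j"
    and val: "PsiXz cj v \<psi> d Y \<zeta> (M2 h11 h12 h21 h22) = \<zeta> t * PsiX \<psi> Y j"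
    using PsiXz_factor h TX_Y_Jd_eq_Hd by blast
  obtain A B where t: "t = M2 A B (\<gamma> * \<gamma> * B) A" "inP v 0 A" "inP v 0 B"
    using TX_Y_shape[OF tj(1)] by blast
  obtain a' b' c' e' where j: "j = M2 a' b' c' e'" by (cases j)
  have J: "inP v n1 (a' - 1)" "inP v n1 b'" "inP v n2 c'" "inP v n1 (e' - 1)"
    using tj(2) unfolding j Jd_iff by auto
  have h21: "h21 = \<gamma> * \<gamma> * B * a' + A * c'" and h22: "h22 = \<gamma> * \<gamma> * B * b' + A * e'"
    using tj(3) unfolding t j by (auto simp: algebra_simps)
  have a0u: "a0 \<noteq> 0" "v a0 = 0" using norm_one_unit[OF a0(1)] by auto
  have gg: "inP v n1 (\<gamma> * \<gamma>)" using inP_mult_le[OF gamma(3) gamma(3)] levels_r by simp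
  have eq: "A - a0 = - ((a0 - h22) + \<gamma> * \<gamma> * B * b' + A * (e' - 1))"
    unfolding h22 by (simp add: algebra_simps)
  have Aa0: "inP v n1 (A - a0)" unfolding eq inP_neg
    using inP_add[OF inP_add[OF a0(2) inP_mult_le[OF inP_mult_right[OF gg t(3)] J(2)]]
      inP_mult_left[OF t(2) J(4)]] levels by simp
  have \<zeta>: "\<zeta> t = \<chi> (M2 a0 0 0 a0)" using zeta_TX_Y tj(1) a0(1) Aa0 unfolding t by blast
  have "PsiX \<psi> Y j = \<psi> (y12 * c')" using PsiX_Y_Jd tj(2) unfolding j by blast
  also have "\<dots> = \<psi> (y12 * h21 / a0)"
  proof (rule psi_congr)
    have "y12 * c' - y12 * h21 / a0 = (y12 * c' * (a0 - A) - (\<gamma> * x1) * (B * a')) / a0"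
      unfolding h21 y12(3) using a0u by (simp add: field_simps)
    moreover have "inP v 1 (y12 * c' * (a0 - A) - (\<gamma> * x1) * (B * a'))"
    proof (rule inP_diff)
      have "inP v n1 (a0 - A)" using Aa0 inP_diff_commute by blast
      then show "inP v 1 (y12 * c' * (a0 - A))"
        using inP_mult_le[OF inP_mult[OF y12(2) J(3)], of n1 "a0 - A" 1] levels(1) by simp
      show "inP v 1 ((\<gamma> * x1) * (B * a'))"
        using inP_mult_right[OF gamma_x1 inP_mult_left[OF t(3) inP_of_congr_1[OF J(1)]]] levels by simp
    qed
    ultimately show "inP v 1 (y12 * c' - y12 * h21 / a0)" using inP_divide_unit_iff[OF a0u] by simp
  qed
  finally show ?thesis using val \<zeta> by simp
qed

section \<open>The intertwining element\<close>

text \<open>Conjugation by \<open>diag(\<mu>, cj \<mu>\<^sup>-\<^sup>1)\<close> divides \<open>h\<^sub>2\<^sub>1\<close> by \<open>N(\<mu>) \<equiv> \<epsilon>\<^sup>-\<^sup>1\<close>, which turns the additive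
  character \<open>\<psi>(\<varpi>\<^sup>-\<^sup>d \<surd>\<epsilon>\<^sup>-\<^sup>1 h\<^sub>2\<^sub>1/a0)\<close> of the \<open>Y\<close>-side into \<open>\<psi>(\<varpi>\<^sup>-\<^sup>d \<surd>\<epsilon> h\<^sub>2\<^sub>1/a0)\<close> of the \<open>X\<close>-side.\<close>
lemma PsiXz_Y_conj:
  assumes \<mu>: "\<mu> \<noteq> 0" "v \<mu> = 0" "inP v n1 (\<mu> * cj \<mu> * (s*s) - 1)" and h: "h \<in> Hd"
  shows "PsiXz cj v \<psi> d Y \<zeta> (mmul (diag_unit \<mu>) (mmul h (diag_unit (inverse \<mu>)))) =
    PsiXz cj v \<psi> d Xn \<theta>ext h"
proof -
  obtain h11 h12 h21 h22 where h_eq: "h = M2 h11 h12 h21 h22" by (cases h)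
  obtain a0 where a0: "a0 * cj a0 = 1" "inP v n1 (a0 - h22)"
    using Hd_norm_one_congr h unfolding h_eq by blast
  have a0u: "a0 \<noteq> 0" "v a0 = 0" using norm_one_unit[OF a0(1)] by auto
  have c: "cj \<mu> \<noteq> 0" using \<mu> by simp
  have conj: "mmul (diag_unit \<mu>) (mmul h (diag_unit (inverse \<mu>))) =
      M2 h11 (\<mu> * h12 * cj \<mu>) (h21 / (\<mu> * cj \<mu>)) h22"
    unfolding h_eq by (rule diag_unit_conj[OF \<mu>(1)])
  have "y12 * (h21 / (\<mu> * cj \<mu>)) / a0 - inverse (varpi ^ d) * s * h21 / a0 =
      - (h21 * (\<mu> * cj \<mu> * (s*s) - 1) * inverse (varpi ^ d)) / (a0 * s * \<mu> * cj \<mu>)"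
    unfolding y12_def using a0u(1) \<mu>(1) c by (simp add: field_simps)
  moreover have "inP v 1 (h21 * (\<mu> * cj \<mu> * (s*s) - 1) * inverse (varpi ^ d))"
  proof -
    have "inP v n2 h21" using h unfolding h_eq Hd_iff by blast
    then have "inP v (n2 + n1 + - int d) (h21 * (\<mu> * cj \<mu> * (s*s) - 1) * inverse (varpi ^ d))"
      by (intro inP_mult \<mu>(3)) (simp_all add: inP_def v_inverse v_power)
    then show ?thesis using levels(1) by (simp add: add.commute)
  qed
  moreover have "a0 * s * \<mu> * cj \<mu> \<noteq> 0" "v (a0 * s * \<mu> * cj \<mu>) = 0"
    using a0u \<mu> c by (auto simp: v_mult)
  ultimately have "\<psi> (y12 * (h21 / (\<mu> * cj \<mu>)) / a0) = \<psi> (inverse (varpi ^ d) * s * h21 / a0)"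
    using inP_divide_unit_iff psi_congr by (metis inP_neg)
  moreover have conj_Hd: "M2 h11 (\<mu> * h12 * cj \<mu>) (h21 / (\<mu> * cj \<mu>)) h22 \<in> Hd"
    using Hd_conj_diag_unit[OF \<mu>(1,2) h] conj by simp
  moreover note PsiXz_Y[OF conj_Hd a0]
  ultimately show ?thesis
    unfolding conj using PsiXz_Xn[OF h[unfolded h_eq] a0] h_eq by simp
qed

lemma rep_iso_Sd_Y_Xn: "rep_iso (Kc cj v) (Sd cj v \<psi> d Y \<zeta>) (Sd cj v \<psi> d Xn \<theta>ext)"
proof -
  obtain \<mu> where \<mu>: "\<mu> \<noteq> 0" "v \<mu> = 0" "inP v n1 (\<mu> * cj \<mu> * (s*s) - 1)"
    using exists_unit_norm_congr by blast
  have \<mu>': "inverse \<mu> \<noteq> 0" "v (inverse \<mu>) = 0" using \<mu> by (simp_all add: v_inverse)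
  show ?thesis
    unfolding Sd_eq_induced_space TX_Y_Jd_eq_Hd TX_Xn_Jd_eq_Hd
  proof (rule rep_iso_induced_space_conj)
    show "diag_unit \<mu> \<in> Kc cj v" "diag_unit (inverse \<mu>) \<in> Kc cj v"
      using diag_unit_Kc \<mu> \<mu>' by blast+
    show "mmul (diag_unit \<mu>) (diag_unit (inverse \<mu>)) = mI"
      "mmul (diag_unit (inverse \<mu>)) (diag_unit \<mu>) = mI"
      using diag_unit_inverse[OF \<mu>(1)] diag_unit_inverse[OF \<mu>'(1)] by simp_all
    show "Hd \<subseteq> Kc cj v" "Hd \<subseteq> Kc cj v" unfolding Hd_def by blast+
    fix h assume h: "h \<in> Hd"
    show "mmul (diag_unit \<mu>) (mmul h (diag_unit (inverse \<mu>))) \<in> Hd \<and>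
        PsiXz cj v \<psi> d Y \<zeta> (mmul (diag_unit \<mu>) (mmul h (diag_unit (inverse \<mu>)))) =
        PsiXz cj v \<psi> d Xn \<theta>ext h"
      using Hd_conj_diag_unit[OF \<mu>(1,2) h] PsiXz_Y_conj[OF \<mu> h] by blast
    show "mmul (diag_unit (inverse \<mu>)) (mmul h (diag_unit \<mu>)) \<in> Hd"
      using Hd_conj_diag_unit[OF \<mu>' h] \<mu>(1) by simp
  qed (rule Kc_mmul)
qed

end

theorem theorem7p1:
  fixes cj :: "'a::field \<Rightarrow> 'a" and v :: "'a \<Rightarrow> int" and varpi s :: 'a
    and \<psi> :: "'a \<Rightarrow> complex" and \<chi> :: "'a m2 \<Rightarrow> complex"
    and r d :: nat and x1 x2 :: 'a
  assumes hE: "unram_setup cj v varpi s"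
    and psi: "psi_ok v \<psi>"
    and chi: "is_char_on (Ttor cj) \<chi>"
    and rpos: "0 < r"
    and depth: "min_depth cj v \<chi> r"
    and theta0: "\<forall>z\<in>Zfil1 cj v. \<chi> z = 1"
    and xF: "cj x1 = x1" "cj x2 = x2"
    and xr: "inP v (- int r) (x1 + x2 * s)"
    and realizes: "\<forall>t\<in>Tfil cj v (int r div 2 + 1).
        \<chi> t = \<psi> (mtrace (mmul (M2 (x1 + x2 * s) 0 0 (- cj (x1 + x2 * s))) (msub t mI)))"
    and dbig: "2 * r < d"
  shows "let \<Gamma> = M2 (x1 + x2 * s) 0 0 (- cj (x1 + x2 * s));
             \<gamma> = x1 * varpi ^ d * s;
             g = M2 1 (- (1/2) * inverse \<gamma>) \<gamma> (1/2);
             Y = mmul g (mmul \<Gamma> (minv g));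
             \<zeta> = (\<lambda>t. \<chi> (mmul (minv g) (mmul t g)));
             Xn = M2 0 (inverse (varpi ^ d) * s) 0 0;
             \<theta>ext = (\<lambda>k. \<chi> (M2 (m11 k) 0 0 (m11 k)))
         in rep_iso (Kc cj v) (Sd cj v \<psi> d Y \<zeta>) (Sd cj v \<psi> d Xn \<theta>ext)"
proof -
  interpret min_depth_char cj v varpi s d \<psi> \<chi> r x1 x2
    using hE psi chi rpos depth theta0 xF xr realizes dbig
    by unfold_locales (simp_all add: unram_field_def)
  show ?thesis
    using rep_iso_Sd_Y_Xn
    unfolding Let_def Y_def gd_def \<gamma>_def \<zeta>_def[abs_def] Xn_def \<theta>ext_def[abs_def] .
qed

end
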